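(* Let $n\ge 1$ and $1\le p\le n$ be integers. The number of $p$-toppleable configurations in $\mathcal{S}(n,p)$ equals $\tfrac12 B_{n-p+1,p}$.
   Context: Sites are the integers $0,1,\dots,n+1$. A configuration in $\mathcal{S}(n,p)$ is a placement of $n+1$ distinct chips labeled $1,\dots,n+1$ such that sites $0$ and $n+1$ are empty, every site $i\in\{1,\dots,n\}\setminus\{p\}$ holds exactly one chip, and site $p$ holds exactly two chips. Toppling: while some site holds at least two chips, choose such a site $i$ and two chips $\alpha<\beta$ at site $i$, and move $\alpha$ to site $i-1$ and $\beta$ to site $i+1$. It is known that this process terminates with all chips in sites $0,\dots,n+1$, every site holding at most one chip (so exactly one site is empty), and that the final configuration does not depend on the choices made. Reading the chip labels of the final configuration from left to right gives a permutation of $[n+1]$; a configuration is $p$-toppleable if this permutation is the identity $12\cdots(n+1)$. The poly-Bernoulli numbers of type B, $B_{n,k}$ ($n,k\ge 0$), are defined by $\sum_{n\ge 0}B_{n,k}\frac{x^n}{n!}=\frac{\mathrm{Li}_{-k}(1-e^{-x})}{1-e^{-x}}$, where $\mathrm{Li}_s(z)=\sum_{i\ge1}z^i/i^s$; equivalently $B_{n,k}=\sum_{m=0}^{\min(n,k)}(m!)^2\left\{{n+1\atop m+1}\right\}\left\{{k+1\atop m+1}\right\}$ with Stirling numbers of the second kind. *)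

theory Defs
  imports Complex_Main "HOL-Combinatorics.Stirling" "HOL-Library.FuncSet"
begin

text \<open>A configuration is a map from chips {1..n+1} to sites (integers), extensional
  outside the chip set.\<close>

definition chips :: "nat \<Rightarrow> nat set" where
  "chips n = {1..n+1}"

definition chips_at :: "nat \<Rightarrow> (nat \<Rightarrow> int) \<Rightarrow> int \<Rightarrow> nat set" where
  "chips_at n c s = {a \<in> chips n. c a = s}"

definition config_S :: "nat \<Rightarrow> nat \<Rightarrow> (nat \<Rightarrow> int) \<Rightarrow> bool" where
  "config_S n p c \<longleftrightarrow>
     c \<in> chips n \<rightarrow>\<^sub>E {0..int n + 1} \<and>
     card (chips_at n c 0) = 0 \<and> card (chips_at n c (int n + 1)) = 0 \<and>
     card (chips_at n c (int p)) = 2 \<and>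
     (\<forall>s \<in> {1..int n} - {int p}. card (chips_at n c s) = 1)"

definition topple_step :: "nat \<Rightarrow> (nat \<Rightarrow> int) \<Rightarrow> (nat \<Rightarrow> int) \<Rightarrow> bool" where
  "topple_step n c c' \<longleftrightarrow>
     (\<exists>\<alpha> \<in> chips n. \<exists>\<beta> \<in> chips n. \<alpha> < \<beta> \<and> c \<alpha> = c \<beta> \<and>
        c' = c(\<alpha> := c \<alpha> - 1, \<beta> := c \<beta> + 1))"

text \<open>Final configuration reads 1 2 ... (n+1) left to right (hence every site holds
  at most one chip, i.e. it is stable).\<close>
definition identity_final :: "nat \<Rightarrow> (nat \<Rightarrow> int) \<Rightarrow> bool" where
  "identity_final n c \<longleftrightarrow> (\<forall>a \<in> chips n. \<forall>b \<in> chips n. a < b \<longrightarrow> c a < c b)"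

text \<open>p-toppleable: the toppling process (whose final configuration is known to be
  independent of choices) ends in the identity permutation.\<close>
definition toppleable :: "nat \<Rightarrow> (nat \<Rightarrow> int) \<Rightarrow> bool" where
  "toppleable n c \<longleftrightarrow> (\<exists>c'. (topple_step n)\<^sup>*\<^sup>* c c' \<and> identity_final n c')"

definition polyB :: "nat \<Rightarrow> nat \<Rightarrow> nat" where
  "polyB n k = (\<Sum>m = 0..min n k. (fact m)^2 * Stirling (n+1) (m+1) * Stirling (k+1) (m+1))"

end

theory Submission
  imports Defs "HOL-Combinatorics.Transposition" "HOL-Library.Confluence"
begin

definition occupied_rows :: "nat \<Rightarrow> (nat \<Rightarrow> nat) \<Rightarrow> nat set" where
  "occupied_rows k f = {a \<in> {1..k}. f a \<noteq> 0}"

(* Row a of the staircase board {(a, j). 1 \<le> j \<le> a \<le> k} holds a rook in column f a,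
   or none if f a = 0. *)
definition staircase_rooks :: "nat \<Rightarrow> nat \<Rightarrow> (nat \<Rightarrow> nat) set" where
  "staircase_rooks k r = {f \<in> {1..k} \<rightarrow>\<^sub>E {0..k}. (\<forall>a \<in> {1..k}. f a \<le> a) \<and>
     inj_on f (occupied_rows k f) \<and> card (occupied_rows k f) = r}"

lemma finite_occupied_rows [simp]: "finite (occupied_rows k f)"
  by (simp add: occupied_rows_def)

lemma finite_staircase_rooks [simp]: "finite (staircase_rooks k r)"
  by (rule finite_subset[of _ "{1..k} \<rightarrow>\<^sub>E {0..k}"]) (auto simp: staircase_rooks_def finite_PiE)

lemma occupied_rows_fun_upd_Suc:
  "occupied_rows (Suc k) (g(Suc k := j)) = (if j = 0 then occupied_rows k g else insert (Suc k) (occupied_rows k g))"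
  by (auto simp: occupied_rows_def)

lemma fun_upd_Suc_in_staircase_rooks_iff:
  assumes "g \<in> extensional {1..k}"
  shows "g(Suc k := j) \<in> staircase_rooks (Suc k) r \<longleftrightarrow>
    (if j = 0 then g \<in> staircase_rooks k r
     else 0 < r \<and> g \<in> staircase_rooks k (r - 1) \<and> j \<in> {1..Suc k} - g ` occupied_rows k g)"
proof -
  have new: "Suc k \<notin> occupied_rows k g" by (simp add: occupied_rows_def)
  have dom: "g(Suc k := j) \<in> {1..Suc k} \<rightarrow>\<^sub>E {0..Suc k} \<and> (\<forall>a \<in> {1..Suc k}. (g(Suc k := j)) a \<le> a)
      \<longleftrightarrow> g \<in> {1..k} \<rightarrow>\<^sub>E {0..k} \<and> (\<forall>a \<in> {1..k}. g a \<le> a) \<and> j \<le> Suc k"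
  proof -
    have ins: "{1..Suc k} = insert (Suc k) {1..k}" by auto
    have "\<forall>a \<in> {1..k}. (g(Suc k := j)) a = g a" by simp
    then show ?thesis using assms
      unfolding PiE_iff ins by (auto simp: extensional_def)
  qed
  have inj: "inj_on (g(Suc k := j)) (occupied_rows k g) = inj_on g (occupied_rows k g)"
    by (rule inj_on_cong) (auto simp: occupied_rows_def)
  have img: "(g(Suc k := j)) ` occupied_rows k g = g ` occupied_rows k g"
    by (auto simp: occupied_rows_def)
  have mem: "g(Suc k := j) \<in> staircase_rooks (Suc k) r \<longleftrightarrow>
      (g \<in> {1..k} \<rightarrow>\<^sub>E {0..k} \<and> (\<forall>a \<in> {1..k}. g a \<le> a) \<and> j \<le> Suc k) \<and>
      inj_on (g(Suc k := j)) (occupied_rows (Suc k) (g(Suc k := j))) \<and>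
      card (occupied_rows (Suc k) (g(Suc k := j))) = r"
    unfolding staircase_rooks_def mem_Collect_eq using dom by blast
  show ?thesis
  proof (cases "j = 0")
    case True
    then show ?thesis
      using inj unfolding mem occupied_rows_fun_upd_Suc by (auto simp: staircase_rooks_def)
  next
    case False
    have "card (insert (Suc k) (occupied_rows k g)) = r \<longleftrightarrow> 0 < r \<and> card (occupied_rows k g) = r - 1"
      using new by auto
    moreover have "inj_on (g(Suc k := j)) (insert (Suc k) (occupied_rows k g)) \<longleftrightarrow>
        inj_on g (occupied_rows k g) \<and> j \<notin> g ` occupied_rows k g"
      using new inj img by simp
    ultimately show ?thesis
      using False unfolding mem occupied_rows_fun_upd_Suc by (auto simp: staircase_rooks_def)
  qed
qed


lemma staircase_rooks_extensional: "f \<in> staircase_rooks k r \<Longrightarrow> f \<in> extensional {1..k}"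
  by (simp add: staircase_rooks_def PiE_def)

lemma card_free_columns:
  assumes "g \<in> staircase_rooks k r"
  shows "card ({1..Suc k} - g ` occupied_rows k g) = Suc k - r"
proof -
  have "g ` occupied_rows k g \<subseteq> {1..Suc k}"
  proof
    fix y assume "y \<in> g ` occupied_rows k g"
    then obtain a where "a \<in> {1..k}" "g a \<noteq> 0" "y = g a" by (auto simp: occupied_rows_def)
    moreover have "g a \<le> a" using assms \<open>a \<in> {1..k}\<close> by (simp add: staircase_rooks_def)
    ultimately show "y \<in> {1..Suc k}" by simp
  qed
  moreover have "card (g ` occupied_rows k g) = r"
    using assms by (simp add: staircase_rooks_def card_image)
  ultimately show ?thesis by (simp add: card_Diff_subset)
qed

lemma card_staircase_rooks_Suc:
  "card (staircase_rooks (Suc k) r) = card (staircase_rooks k r) +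
     (if r = 0 then 0 else card (staircase_rooks k (r - 1)) * (Suc k - (r - 1)))"
proof -
  define extend where "extend = (\<lambda>(g, j). g(Suc k := j :: nat))"
  define D where "D = staircase_rooks k r \<times> {0} \<union>
    (if r = 0 then {} else Sigma (staircase_rooks k (r - 1)) (\<lambda>g. {1..Suc k} - g ` occupied_rows k g))"
  have "staircase_rooks (Suc k) r = extend ` D"
  proof
    show "extend ` D \<subseteq> staircase_rooks (Suc k) r"
      using fun_upd_Suc_in_staircase_rooks_iff staircase_rooks_extensional
      by (auto simp: extend_def D_def split: if_splits)
    show "staircase_rooks (Suc k) r \<subseteq> extend ` D"
    proof
      fix f assume f: "f \<in> staircase_rooks (Suc k) r"
      define g where "g = restrict f {1..k}"
      have "f = g(Suc k := f (Suc k))"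
        using staircase_rooks_extensional[OF f]
        by (intro ext) (auto simp: g_def extensional_def le_Suc_eq)
      moreover have "(g, f (Suc k)) \<in> D"
        using f fun_upd_Suc_in_staircase_rooks_iff[of g k "f (Suc k)" r] calculation
        by (auto simp: g_def D_def split: if_splits)
      ultimately show "f \<in> extend ` D"
        using image_eqI[of f extend "(g, f (Suc k))" D] by (simp add: extend_def)
    qed
  qed
  moreover have "inj_on extend D"
  proof (rule inj_onI)
    fix x y assume "x \<in> D" "y \<in> D" "extend x = extend y"
    moreover obtain g j g' j' where "x = (g, j)" "y = (g', j')" by fastforce
    ultimately have "g \<in> extensional {1..k}" "g' \<in> extensional {1..k}"
      and "g(Suc k := j) = g'(Suc k := j')"
      using staircase_rooks_extensional by (auto simp: D_def extend_def split: if_splits)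
    moreover from this(3) have "j = j'" by (metis fun_upd_same)
    moreover from \<open>g(Suc k := j) = g'(Suc k := j')\<close> have "g a = g' a" if "a \<in> {1..k}" for a
    proof -
      have "a \<noteq> Suc k" using that by simp
      then show ?thesis using fun_cong[OF \<open>g(Suc k := j) = g'(Suc k := j')\<close>, of a] by simp
    qed
    ultimately show "x = y"
      using \<open>x = (g, j)\<close> \<open>y = (g', j')\<close> extensionalityI[of g "{1..k}" g'] by simp
  qed
  moreover have "card D = card (staircase_rooks k r) +
     (if r = 0 then 0 else card (staircase_rooks k (r - 1)) * (Suc k - (r - 1)))"
  proof -
    let ?S = "Sigma (staircase_rooks k (r - 1)) (\<lambda>g. {1..Suc k} - g ` occupied_rows k g)"
    have "card ?S = card (staircase_rooks k (r - 1)) * (Suc k - (r - 1))"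
    proof -
      have "\<forall>g \<in> staircase_rooks k (r - 1). card ({1..Suc k} - g ` occupied_rows k g) = Suc k - (r - 1)"
        using card_free_columns by blast
      then show ?thesis by (subst card_SigmaI) auto
    qed
    moreover have "card (staircase_rooks k r \<times> {0} \<union> ?S) = card (staircase_rooks k r \<times> {0::nat}) + card ?S"
      by (rule card_Un_disjoint) auto
    ultimately show ?thesis by (simp add: D_def card_cartesian_product)
  qed
  ultimately show ?thesis by (simp add: card_image)
qed

lemma card_staircase_rooks: "card (staircase_rooks k r) = Stirling (Suc k) (Suc k - r)"
proof (induction k arbitrary: r)
  case 0
  have "staircase_rooks 0 r = (if r = 0 then {\<lambda>_. undefined} else {})"
    by (auto simp: staircase_rooks_def occupied_rows_def PiE_def extensional_def)
  then show ?case by simp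
next
  case (Suc k)
  consider "r = 0" | "0 < r" "r \<le> Suc k" | "Suc k < r" by linarith
  then show ?case
  proof cases
    case 2
    then have "Suc (Suc k) - r = Suc (Suc k - r)" "Suc k - (r - 1) = Suc (Suc k - r)" by auto
    then show ?thesis using 2 by (simp add: card_staircase_rooks_Suc Suc.IH)
  qed (auto simp: card_staircase_rooks_Suc Suc.IH)
qed

lemma card_injections_eq_fact:
  assumes "finite A" "finite B" "card A = card B"
  shows "card {f \<in> A \<rightarrow>\<^sub>E B. inj_on f A} = fact (card A)"
  using card_inj_on_subset_funcset[OF assms(1,2) subset_refl] assms(3)
  by (simp add: fact_prod_rev[where 'a=nat])

lemma card_injective_extensions:
  fixes \<phi> :: "'a \<Rightarrow> 'b"
  assumes fin: "finite L" "finite H" "finite S" "finite T"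
    and cards: "card L = card S" "card H = card T"
    and dom: "X = F \<union> L \<union> H" "F \<inter> L = {}" "F \<inter> H = {}" "L \<inter> H = {}"
    and cod: "Y = \<phi> ` F \<union> S \<union> T" "\<phi> ` F \<inter> S = {}" "\<phi> ` F \<inter> T = {}" "S \<inter> T = {}"
    and inj: "inj_on \<phi> F"
  shows "card {\<sigma> \<in> X \<rightarrow>\<^sub>E Y. inj_on \<sigma> X \<and> (\<forall>a \<in> F. \<sigma> a = \<phi> a) \<and> \<sigma> ` L \<subseteq> S \<and> \<sigma> ` H \<subseteq> T}
    = fact (card L) * fact (card H)"
proof -
  define E where "E = {\<sigma> \<in> X \<rightarrow>\<^sub>E Y. inj_on \<sigma> X \<and> (\<forall>a \<in> F. \<sigma> a = \<phi> a) \<and> \<sigma> ` L \<subseteq> S \<and> \<sigma> ` H \<subseteq> T}"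
  define IL where "IL = {\<alpha> \<in> L \<rightarrow>\<^sub>E S. inj_on \<alpha> L}"
  define IH where "IH = {\<beta> \<in> H \<rightarrow>\<^sub>E T. inj_on \<beta> H}"
  define glue where "glue = (\<lambda>(\<alpha>, \<beta>). \<lambda>a \<in> X. if a \<in> F then \<phi> a else if a \<in> L then \<alpha> a else \<beta> a)"
  have "bij_betw (\<lambda>\<sigma>. (restrict \<sigma> L, restrict \<sigma> H)) E (IL \<times> IH)"
  proof (rule bij_betw_byWitness[where f' = glue])
    show "\<forall>\<sigma> \<in> E. glue (restrict \<sigma> L, restrict \<sigma> H) = \<sigma>"
    proof
      fix \<sigma> assume "\<sigma> \<in> E"
      then have "\<sigma> \<in> extensional X" "\<forall>a \<in> F. \<sigma> a = \<phi> a" by (auto simp: E_def PiE_def)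
      then show "glue (restrict \<sigma> L, restrict \<sigma> H) = \<sigma>"
        using dom(1) by (intro ext) (auto simp: glue_def extensional_def)
    qed
    show "\<forall>x \<in> IL \<times> IH. (restrict (glue x) L, restrict (glue x) H) = x"
    proof
      fix x assume "x \<in> IL \<times> IH"
      then obtain \<alpha> \<beta> where x: "x = (\<alpha>, \<beta>)" "\<alpha> \<in> extensional L" "\<beta> \<in> extensional H"
        by (auto simp: IL_def IH_def PiE_def)
      have "restrict (glue x) L = \<alpha>"
        using x dom by (intro ext) (auto simp: glue_def extensional_def)
      moreover have "restrict (glue x) H = \<beta>"
        using x dom by (intro ext) (auto simp: glue_def extensional_def)
      ultimately show "(restrict (glue x) L, restrict (glue x) H) = x" using x by simp
    qed
    show "(\<lambda>\<sigma>. (restrict \<sigma> L, restrict \<sigma> H)) ` E \<subseteq> IL \<times> IH"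
    proof safe
      fix \<sigma> assume "\<sigma> \<in> E"
      then have "inj_on \<sigma> L" "inj_on \<sigma> H" "\<sigma> ` L \<subseteq> S" "\<sigma> ` H \<subseteq> T"
        using dom(1) by (auto simp: E_def intro: inj_on_subset)
      then show "restrict \<sigma> L \<in> IL" "restrict \<sigma> H \<in> IH"
        by (auto simp: IL_def IH_def inj_on_def)
    qed
    show "glue ` (IL \<times> IH) \<subseteq> E"
    proof safe
      fix \<alpha> \<beta> assume "\<alpha> \<in> IL" "\<beta> \<in> IH"
      then have \<alpha>: "\<alpha> ` L \<subseteq> S" "inj_on \<alpha> L" and \<beta>: "\<beta> ` H \<subseteq> T" "inj_on \<beta> H"
        by (auto simp: IL_def IH_def)
      let ?\<sigma> = "glue (\<alpha>, \<beta>)"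
      have on_F: "\<And>a. a \<in> F \<Longrightarrow> ?\<sigma> a = \<phi> a" and on_L: "\<And>a. a \<in> L \<Longrightarrow> ?\<sigma> a = \<alpha> a"
        and on_H: "\<And>a. a \<in> H \<Longrightarrow> ?\<sigma> a = \<beta> a"
        using dom by (auto simp: glue_def)
      have img: "?\<sigma> ` F = \<phi> ` F" "?\<sigma> ` L \<subseteq> S" "?\<sigma> ` H \<subseteq> T"
        using on_F on_L on_H \<alpha> \<beta> by auto
      have "inj_on ?\<sigma> F" using inj on_F by (simp add: inj_on_def)
      moreover have "inj_on ?\<sigma> L" using \<alpha>(2) on_L by (simp add: inj_on_def)
      moreover have "inj_on ?\<sigma> H" using \<beta>(2) on_H by (simp add: inj_on_def)
      moreover have "?\<sigma> ` (F - L) \<inter> ?\<sigma> ` (L - F) = {}"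
      proof -
        have "?\<sigma> ` (F - L) \<subseteq> \<phi> ` F" "?\<sigma> ` (L - F) \<subseteq> S"
          using img image_mono[of "F - L" F ?\<sigma>] image_mono[of "L - F" L ?\<sigma>] by auto
        then show ?thesis using cod(2) by blast
      qed
      moreover have "?\<sigma> ` (F \<union> L - H) \<inter> ?\<sigma> ` (H - (F \<union> L)) = {}"
      proof -
        have "?\<sigma> ` (F \<union> L - H) \<subseteq> \<phi> ` F \<union> S" "?\<sigma> ` (H - (F \<union> L)) \<subseteq> T"
          using img image_mono[of "F \<union> L - H" "F \<union> L" ?\<sigma>] image_mono[of "H - (F \<union> L)" H ?\<sigma>]
          by (auto simp: image_Un)
        then show ?thesis using cod(3,4) by blast
      qed
      ultimately have "inj_on ?\<sigma> (F \<union> L \<union> H)"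
        by (simp add: inj_on_Un)
      moreover have "?\<sigma> \<in> X \<rightarrow>\<^sub>E Y"
      proof -
        have "?\<sigma> ` X \<subseteq> Y"
          unfolding dom(1) cod(1) image_Un using img by blast
        moreover have "?\<sigma> \<in> extensional X" by (simp add: glue_def)
        ultimately show ?thesis by (simp add: PiE_iff image_subset_iff)
      qed
      ultimately show "?\<sigma> \<in> E"
        using on_F img dom(1) by (auto simp: E_def)
    qed
  qed
  then have "card E = card IL * card IH"
    by (simp add: bij_betw_same_card card_cartesian_product)
  also have "\<dots> = fact (card L) * fact (card H)"
    using fin cards by (simp add: IL_def IH_def card_injections_eq_fact)
  finally show ?thesis by (simp add: E_def)
qed


definition vesztergombi_perms :: "nat \<Rightarrow> nat \<Rightarrow> (nat \<Rightarrow> nat) set" where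
  "vesztergombi_perms h p = {\<sigma> \<in> {1..h+p} \<rightarrow>\<^sub>E {1..h+p}. inj_on \<sigma> {1..h+p} \<and>
     (\<forall>a \<in> {1..h+p}. a \<le> \<sigma> a + h \<and> \<sigma> a \<le> a + p)}"

definition low_rooks :: "nat \<Rightarrow> nat \<Rightarrow> (nat \<Rightarrow> nat) \<Rightarrow> nat \<Rightarrow> nat" where
  "low_rooks h p \<sigma> = (\<lambda>a \<in> {1..h}. if p < \<sigma> a then \<sigma> a - p else 0)"

definition high_rooks :: "nat \<Rightarrow> nat \<Rightarrow> (nat \<Rightarrow> nat) \<Rightarrow> nat \<Rightarrow> nat" where
  "high_rooks h p \<sigma> = (\<lambda>b \<in> {1..p}. if \<sigma> (h + p + 1 - b) \<le> p then p + 1 - \<sigma> (h + p + 1 - b) else 0)"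

definition corner_count :: "nat \<Rightarrow> nat \<Rightarrow> (nat \<Rightarrow> nat) \<Rightarrow> nat" where
  "corner_count h p \<sigma> = card {a \<in> {1..h}. \<sigma> a \<le> p}"

lemma finite_vesztergombi_perms [simp]: "finite (vesztergombi_perms h p)"
  by (rule finite_subset[of _ "{1..h+p} \<rightarrow>\<^sub>E {1..h+p}"]) (auto simp: vesztergombi_perms_def finite_PiE)

lemma card_preimage_vesztergombi:
  assumes "\<sigma> \<in> vesztergombi_perms h p"
  shows "card {a \<in> {1..h+p}. \<sigma> a \<in> V} = card (V \<inter> {1..h+p})"
proof -
  have inj: "inj_on \<sigma> {1..h+p}" and "\<sigma> ` {1..h+p} \<subseteq> {1..h+p}"
    using assms by (auto simp: vesztergombi_perms_def)
  then have "\<sigma> ` {1..h+p} = {1..h+p}" by (simp add: endo_inj_surj)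
  moreover have "\<sigma> ` {a \<in> {1..h+p}. \<sigma> a \<in> V} = V \<inter> \<sigma> ` {1..h+p}" by auto
  ultimately have "\<sigma> ` {a \<in> {1..h+p}. \<sigma> a \<in> V} = V \<inter> {1..h+p}" by simp
  moreover have "inj_on \<sigma> {a \<in> {1..h+p}. \<sigma> a \<in> V}" using inj by (rule inj_on_subset) auto
  ultimately show ?thesis using card_image by fastforce
qed


lemma vesztergombi_permsD:
  assumes "\<sigma> \<in> vesztergombi_perms h p" "a \<in> {1..h+p}"
  shows "1 \<le> \<sigma> a" "\<sigma> a \<le> h + p" "a \<le> \<sigma> a + h" "\<sigma> a \<le> a + p"
  using assms by (auto simp: vesztergombi_perms_def PiE_def Pi_def)

lemma low_rooks_in_staircase_rooks:
  assumes \<sigma>: "\<sigma> \<in> vesztergombi_perms h p"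
  shows "low_rooks h p \<sigma> \<in> staircase_rooks h (h - corner_count h p \<sigma>)"
proof -
  let ?f = "low_rooks h p \<sigma>"
  have rows: "occupied_rows h ?f = {a \<in> {1..h}. p < \<sigma> a}"
    by (auto simp: occupied_rows_def low_rooks_def)
  have le: "?f a \<le> a" if "a \<in> {1..h}" for a
    using vesztergombi_permsD(4)[OF \<sigma>, of a] that by (auto simp: low_rooks_def)
  moreover have "?f \<in> extensional {1..h}" by (simp add: low_rooks_def)
  ultimately have "?f \<in> {1..h} \<rightarrow>\<^sub>E {0..h}" "\<forall>a \<in> {1..h}. ?f a \<le> a"
    by (auto simp: PiE_iff) (meson le order_trans atLeastAtMost_iff)
  moreover have "inj_on ?f (occupied_rows h ?f)"
  proof (rule inj_onI)
    fix a a' assume "a \<in> occupied_rows h ?f" "a' \<in> occupied_rows h ?f" "?f a = ?f a'"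
    then have "\<sigma> a = \<sigma> a'" "a \<in> {1..h+p}" "a' \<in> {1..h+p}"
      unfolding rows by (auto simp: low_rooks_def)
    then show "a = a'" using \<sigma> by (auto simp: vesztergombi_perms_def dest: inj_onD)
  qed
  moreover have "card (occupied_rows h ?f) = h - corner_count h p \<sigma>"
  proof -
    have "card {1..h} = card ({a \<in> {1..h}. \<sigma> a \<le> p} \<union> {a \<in> {1..h}. p < \<sigma> a})"
      by (rule arg_cong[where f = card]) auto
    then have "h = corner_count h p \<sigma> + card {a \<in> {1..h}. p < \<sigma> a}"
      by (subst (asm) card_Un_disjoint) (auto simp: corner_count_def)
    then show ?thesis by (simp add: rows)
  qed
  ultimately show ?thesis by (simp add: staircase_rooks_def)
qed

lemma high_rooks_in_staircase_rooks:
  assumes \<sigma>: "\<sigma> \<in> vesztergombi_perms h p"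
  shows "high_rooks h p \<sigma> \<in> staircase_rooks p (p - corner_count h p \<sigma>)"
proof -
  let ?g = "high_rooks h p \<sigma>"
  let ?m = "\<lambda>b. h + p + 1 - b"
  have m: "?m b \<in> {1..h+p}" "?m b \<in> {h+1..h+p}" if "b \<in> {1..p}" for b
    using that by auto
  have rows: "occupied_rows p ?g = {b \<in> {1..p}. \<sigma> (?m b) \<le> p}"
    using vesztergombi_permsD(1)[OF \<sigma> m(1)] by (auto simp: occupied_rows_def high_rooks_def)
  have le: "?g b \<le> b" if "b \<in> {1..p}" for b
    using vesztergombi_permsD(3)[OF \<sigma> m(1)[OF that]] that by (auto simp: high_rooks_def)
  moreover have "?g \<in> extensional {1..p}" by (simp add: high_rooks_def)
  ultimately have "?g \<in> {1..p} \<rightarrow>\<^sub>E {0..p}" "\<forall>b \<in> {1..p}. ?g b \<le> b"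
    by (auto simp: PiE_iff) (meson le order_trans atLeastAtMost_iff)
  moreover have "inj_on ?g (occupied_rows p ?g)"
  proof (rule inj_onI)
    fix b b' assume "b \<in> occupied_rows p ?g" "b' \<in> occupied_rows p ?g" "?g b = ?g b'"
    then have b: "b \<in> {1..p}" "b' \<in> {1..p}" "\<sigma> (?m b) \<le> p" "\<sigma> (?m b') \<le> p"
      and "p + 1 - \<sigma> (?m b) = p + 1 - \<sigma> (?m b')"
      unfolding rows by (auto simp: high_rooks_def)
    moreover have "1 \<le> \<sigma> (?m b)" "1 \<le> \<sigma> (?m b')"
      using vesztergombi_permsD(1)[OF \<sigma> m(1)] b by auto
    ultimately have "\<sigma> (?m b) = \<sigma> (?m b')" "b \<in> {1..p}" "b' \<in> {1..p}" by linarith+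
    then show "b = b'"
      using \<sigma> m(1) by (auto simp: vesztergombi_perms_def dest: inj_onD)
  qed
  moreover have "card (occupied_rows p ?g) = p - corner_count h p \<sigma>"
  proof -
    have "p = card {a \<in> {1..h+p}. \<sigma> a \<in> {1..p}}"
      using card_preimage_vesztergombi[OF \<sigma>, of "{1..p}"] by (simp add: Int_absorb2)
    also have "{a \<in> {1..h+p}. \<sigma> a \<in> {1..p}} = {a \<in> {1..h}. \<sigma> a \<le> p} \<union> ?m ` occupied_rows p ?g"
    proof (intro equalityI subsetI)
      fix a assume a: "a \<in> {a \<in> {1..h+p}. \<sigma> a \<in> {1..p}}"
      show "a \<in> {a \<in> {1..h}. \<sigma> a \<le> p} \<union> ?m ` occupied_rows p ?g"
      proof (cases "a \<le> h")
        case False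
        then have "?m a \<in> occupied_rows p ?g" "a = ?m (?m a)" using a unfolding rows by auto
        then show ?thesis by blast
      qed (use a in auto)
    next
      fix a assume "a \<in> {a \<in> {1..h}. \<sigma> a \<le> p} \<union> ?m ` occupied_rows p ?g"
      then show "a \<in> {a \<in> {1..h+p}. \<sigma> a \<in> {1..p}}"
        using vesztergombi_permsD(1)[OF \<sigma>] m(1) unfolding rows by fastforce
    qed
    also have "card \<dots> = corner_count h p \<sigma> + card (occupied_rows p ?g)"
    proof -
      have "inj_on ?m (occupied_rows p ?g)" by (rule inj_onI) (auto simp: rows)
      moreover have "{a \<in> {1..h}. \<sigma> a \<le> p} \<inter> ?m ` occupied_rows p ?g = {}" by (auto simp: rows)
      ultimately show ?thesis
        by (simp add: card_Un_disjoint card_image corner_count_def)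
    qed
    finally show ?thesis by simp
  qed
  ultimately show ?thesis by (simp add: staircase_rooks_def)
qed

lemma corner_count_le:
  assumes "\<sigma> \<in> vesztergombi_perms h p"
  shows "corner_count h p \<sigma> \<le> h" "corner_count h p \<sigma> \<le> p"
proof -
  show "corner_count h p \<sigma> \<le> h"
    unfolding corner_count_def by (rule order_trans[OF card_mono[of "{1..h}"]]) auto
  have "corner_count h p \<sigma> \<le> card {a \<in> {1..h+p}. \<sigma> a \<in> {1..p}}"
    unfolding corner_count_def using vesztergombi_permsD(1)[OF assms] by (intro card_mono) auto
  then show "corner_count h p \<sigma> \<le> p"
    using card_preimage_vesztergombi[OF assms, of "{1..p}"] by (simp add: Int_absorb2)
qed


locale rook_pair =
  fixes h p t :: nat and f g :: "nat \<Rightarrow> nat"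
  assumes f_rooks: "f \<in> staircase_rooks h (h - t)" and g_rooks: "g \<in> staircase_rooks p (p - t)"
    and t_le_h: "t \<le> h" and t_le_p: "t \<le> p"
begin

definition mirror :: "nat \<Rightarrow> nat" where
  "mirror b = h + p + 1 - b"

definition forced :: "nat \<Rightarrow> nat" where
  "forced a = (if a \<le> h then p + f a else p + 1 - g (mirror a))"

definition forced_rows :: "nat set" where
  "forced_rows = occupied_rows h f \<union> mirror ` occupied_rows p g"

definition free_low :: "nat set" where
  "free_low = {a \<in> {1..h}. f a = 0}"

definition free_high :: "nat set" where
  "free_high = mirror ` {b \<in> {1..p}. g b = 0}"

definition free_low_values :: "nat set" where
  "free_low_values = {1..p} - forced ` mirror ` occupied_rows p g"

definition free_high_values :: "nat set" where
  "free_high_values = {p+1..h+p} - forced ` occupied_rows h f"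

lemma f_occupied: "a \<in> occupied_rows h f \<Longrightarrow> a \<in> {1..h} \<and> 1 \<le> f a \<and> f a \<le> a"
  using f_rooks by (auto simp: staircase_rooks_def occupied_rows_def)

lemma g_occupied: "b \<in> occupied_rows p g \<Longrightarrow> b \<in> {1..p} \<and> 1 \<le> g b \<and> g b \<le> b"
  using g_rooks by (auto simp: staircase_rooks_def occupied_rows_def)

lemma mirror_range: "b \<in> {1..p} \<Longrightarrow> mirror b \<in> {h+1..h+p} \<and> mirror (mirror b) = b"
  by (auto simp: mirror_def)

lemma forced_low: "a \<in> occupied_rows h f \<Longrightarrow> forced a = p + f a"
  using f_occupied by (simp add: forced_def)

lemma forced_high: "b \<in> occupied_rows p g \<Longrightarrow> forced (mirror b) = p + 1 - g b"
  using g_occupied[of b] mirror_range[of b] by (simp add: forced_def)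

lemma in_fibreD:
  assumes \<sigma>: "\<sigma> \<in> vesztergombi_perms h p" and low: "low_rooks h p \<sigma> = f" and high: "high_rooks h p \<sigma> = g"
  shows "\<forall>a \<in> forced_rows. \<sigma> a = forced a" "\<sigma> ` free_low \<subseteq> free_low_values"
    "\<sigma> ` free_high \<subseteq> free_high_values"
proof -
  have f_eq: "f a = (if p < \<sigma> a then \<sigma> a - p else 0)" if "a \<in> {1..h}" for a
    using low that by (auto simp: low_rooks_def)
  have g_eq: "g b = (if \<sigma> (mirror b) \<le> p then p + 1 - \<sigma> (mirror b) else 0)" if "b \<in> {1..p}" for b
    using high that by (auto simp: high_rooks_def mirror_def)
  have \<sigma>_mirror: "1 \<le> \<sigma> (mirror b) \<and> \<sigma> (mirror b) \<le> h + p" if "b \<in> {1..p}" for b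
    using vesztergombi_permsD(1,2)[OF \<sigma>] mirror_range[OF that] by simp
  have \<sigma>_low: "\<sigma> a = forced a" if "a \<in> occupied_rows h f" for a
    using f_eq[of a] f_occupied[OF that] forced_low[OF that] by (auto split: if_splits)
  have \<sigma>_high: "\<sigma> (mirror b) = forced (mirror b)" if "b \<in> occupied_rows p g" for b
    using g_eq[of b] g_occupied[OF that] forced_high[OF that] \<sigma>_mirror[of b] by (auto split: if_splits)
  show forced: "\<forall>a \<in> forced_rows. \<sigma> a = forced a"
    using \<sigma>_low \<sigma>_high by (auto simp: forced_rows_def)
  have inj: "\<sigma> a = \<sigma> a' \<Longrightarrow> a \<in> {1..h+p} \<Longrightarrow> a' \<in> {1..h+p} \<Longrightarrow> a = a'" for a a'
    using \<sigma> by (auto simp: vesztergombi_perms_def dest: inj_onD)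
  show "\<sigma> ` free_low \<subseteq> free_low_values"
  proof safe
    fix a assume "a \<in> free_low"
    then have a: "a \<in> {1..h}" "\<sigma> a \<le> p" "1 \<le> \<sigma> a"
      using f_eq[of a] vesztergombi_permsD(1)[OF \<sigma>, of a] by (auto simp: free_low_def split: if_splits)
    have "\<sigma> a \<noteq> forced (mirror b)" if "b \<in> occupied_rows p g" for b
    proof
      assume "\<sigma> a = forced (mirror b)"
      moreover have "mirror b \<in> {1..h+p}" using mirror_range[of b] g_occupied[OF that] by auto
      ultimately have "a = mirror b"
        using \<sigma>_high[OF that] inj[of a "mirror b"] a(1) by auto
      then show False using a(1) mirror_range[of b] g_occupied[OF that] by auto
    qed
    then show "\<sigma> a \<in> free_low_values" using a by (auto simp: free_low_values_def)
  qed
  show "\<sigma> ` free_high \<subseteq> free_high_values"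
  proof safe
    fix a assume "a \<in> free_high"
    then obtain b where b: "b \<in> {1..p}" "g b = 0" "a = mirror b" by (auto simp: free_high_def)
    then have a: "a \<in> {h+1..h+p}" "p < \<sigma> a" "\<sigma> a \<le> h + p"
      using g_eq[of b] \<sigma>_mirror[of b] mirror_range[of b] by (auto split: if_splits)
    have "\<sigma> a \<noteq> forced a'" if "a' \<in> occupied_rows h f" for a'
    proof
      assume "\<sigma> a = forced a'"
      then have "a = a'" using \<sigma>_low[OF that] inj[of a a'] a(1) f_occupied[OF that] by auto
      then show False using a(1) f_occupied[OF that] by auto
    qed
    then show "\<sigma> a \<in> free_high_values" using a by (auto simp: free_high_values_def)
  qed
qed


lemma in_fibreI:
  assumes \<sigma>: "\<sigma> \<in> {1..h+p} \<rightarrow>\<^sub>E {1..h+p}" "inj_on \<sigma> {1..h+p}"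
    and forced: "\<forall>a \<in> forced_rows. \<sigma> a = forced a"
    and low: "\<sigma> ` free_low \<subseteq> free_low_values" and high: "\<sigma> ` free_high \<subseteq> free_high_values"
  shows "\<sigma> \<in> vesztergombi_perms h p \<and> low_rooks h p \<sigma> = f \<and> high_rooks h p \<sigma> = g"
proof -
  have low_cases: "(a \<in> occupied_rows h f \<and> \<sigma> a = p + f a) \<or> (f a = 0 \<and> 1 \<le> \<sigma> a \<and> \<sigma> a \<le> p)"
    if "a \<in> {1..h}" for a
  proof (cases "f a = 0")
    case True
    then have "a \<in> free_low" using that by (simp add: free_low_def)
    then show ?thesis using low True by (auto simp: free_low_values_def)
  next
    case False
    then have "a \<in> occupied_rows h f" using that by (simp add: occupied_rows_def)
    then show ?thesis using forced forced_low by (auto simp: forced_rows_def)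
  qed
  have high_cases: "(b \<in> occupied_rows p g \<and> \<sigma> (mirror b) = p + 1 - g b) \<or>
      (g b = 0 \<and> p < \<sigma> (mirror b) \<and> \<sigma> (mirror b) \<le> h + p)" if "b \<in> {1..p}" for b
  proof (cases "g b = 0")
    case True
    then have "mirror b \<in> free_high" using that by (auto simp: free_high_def)
    then show ?thesis using high True by (auto simp: free_high_values_def)
  next
    case False
    then have "b \<in> occupied_rows p g" using that by (simp add: occupied_rows_def)
    then show ?thesis using forced forced_high by (auto simp: forced_rows_def)
  qed
  have f_le: "f a \<le> a" if "a \<in> {1..h}" for a
    using f_rooks that by (simp add: staircase_rooks_def)
  have g_le: "g b \<le> b" if "b \<in> {1..p}" for b
    using g_rooks that by (simp add: staircase_rooks_def)
  have "a \<le> \<sigma> a + h \<and> \<sigma> a \<le> a + p" if "a \<in> {1..h+p}" for a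
  proof (cases "a \<le> h")
    case True
    then show ?thesis using low_cases[of a] f_le[of a] that by auto
  next
    case False
    define b where "b = mirror a"
    have b: "b \<in> {1..p}" "mirror b = a" using False that by (auto simp: b_def mirror_def)
    then show ?thesis using high_cases[OF b(1)] g_le[OF b(1)] by (auto simp: mirror_def)
  qed
  then have "\<sigma> \<in> vesztergombi_perms h p" using \<sigma> by (simp add: vesztergombi_perms_def)
  moreover have "low_rooks h p \<sigma> = f"
  proof
    fix a show "low_rooks h p \<sigma> a = f a"
    proof (cases "a \<in> {1..h}")
      case True
      then show ?thesis using low_cases[OF True] f_occupied by (auto simp: low_rooks_def)
    next
      case False
      then show ?thesis using f_rooks by (auto simp: low_rooks_def staircase_rooks_def PiE_def extensional_def)
    qed
  qed
  moreover have "high_rooks h p \<sigma> = g"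
  proof
    fix b show "high_rooks h p \<sigma> b = g b"
    proof (cases "b \<in> {1..p}")
      case True
      then show ?thesis using high_cases[OF True] g_occupied[of b] by (auto simp: high_rooks_def mirror_def)
    next
      case False
      then show ?thesis using g_rooks by (auto simp: high_rooks_def staircase_rooks_def PiE_def extensional_def)
    qed
  qed
  ultimately show ?thesis by blast
qed


lemma forced_low_image: "forced ` occupied_rows h f = (+) p ` f ` occupied_rows h f"
  using forced_low by (force simp: image_iff)

lemma forced_high_image: "forced ` mirror ` occupied_rows p g = (\<lambda>v. p + 1 - v) ` g ` occupied_rows p g"
  using forced_high by (force simp: image_iff)

lemma forced_image_subsets:
  "forced ` occupied_rows h f \<subseteq> {p+1..h+p}" "forced ` mirror ` occupied_rows p g \<subseteq> {1..p}"
  using f_occupied g_occupied unfolding forced_low_image forced_high_image by force+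

lemma card_forced_images:
  "card (forced ` occupied_rows h f) = h - t" "card (forced ` mirror ` occupied_rows p g) = p - t"
proof -
  have "inj_on f (occupied_rows h f)" "card (occupied_rows h f) = h - t"
    "inj_on g (occupied_rows p g)" "card (occupied_rows p g) = p - t"
    using f_rooks g_rooks by (auto simp: staircase_rooks_def)
  moreover have "inj_on (\<lambda>v. p + 1 - v) (g ` occupied_rows p g)"
    using g_occupied by (force simp: inj_on_def)
  ultimately show "card (forced ` occupied_rows h f) = h - t" "card (forced ` mirror ` occupied_rows p g) = p - t"
    unfolding forced_low_image forced_high_image by (simp_all add: card_image)
qed

lemma inj_on_forced: "inj_on forced forced_rows"
proof -
  have "inj_on forced (occupied_rows h f)"
    using f_rooks forced_low by (auto simp: staircase_rooks_def inj_on_def)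
  moreover have "inj_on forced (mirror ` occupied_rows p g)"
  proof (rule inj_onI, clarify)
    fix b b' assume b: "b \<in> occupied_rows p g" "b' \<in> occupied_rows p g" "forced (mirror b) = forced (mirror b')"
    then have "p + 1 - g b = p + 1 - g b'" by (simp add: forced_high)
    moreover have "g b \<le> p" "g b' \<le> p" using g_occupied[OF b(1)] g_occupied[OF b(2)] by auto
    ultimately have "g b = g b'" by arith
    then show "mirror b = mirror b'"
      using g_rooks b by (auto simp: staircase_rooks_def dest: inj_onD)
  qed
  moreover have "forced ` occupied_rows h f \<inter> forced ` mirror ` occupied_rows p g = {}"
    using forced_image_subsets by fastforce
  ultimately show ?thesis
    unfolding forced_rows_def inj_on_Un by blast
qed

lemma card_free_low: "card free_low = t"
proof -
  have "card {1..h} = card (free_low \<union> occupied_rows h f)"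
    by (rule arg_cong[where f = card]) (auto simp: free_low_def occupied_rows_def)
  also have "\<dots> = card free_low + (h - t)"
    using f_rooks by (subst card_Un_disjoint) (auto simp: free_low_def occupied_rows_def staircase_rooks_def)
  finally show ?thesis using t_le_h by simp
qed

lemma card_free_high: "card free_high = t"
proof -
  have "inj_on mirror {b \<in> {1..p}. g b = 0}" by (rule inj_onI) (auto simp: mirror_def)
  then have "card free_high = card {b \<in> {1..p}. g b = 0}" by (simp add: free_high_def card_image)
  moreover have "card {1..p} = card ({b \<in> {1..p}. g b = 0} \<union> occupied_rows p g)"
    by (rule arg_cong[where f = card]) (auto simp: occupied_rows_def)
  moreover have "\<dots> = card {b \<in> {1..p}. g b = 0} + (p - t)"
    using g_rooks by (subst card_Un_disjoint) (auto simp: occupied_rows_def staircase_rooks_def)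
  ultimately show ?thesis using t_le_p by simp
qed

lemma card_free_values: "card free_low_values = t" "card free_high_values = t"
  using forced_image_subsets card_forced_images t_le_h t_le_p
  by (simp_all add: free_low_values_def free_high_values_def card_Diff_subset)


lemma row_ranges:
  "occupied_rows h f \<subseteq> {1..h}" "free_low \<subseteq> {1..h}"
  "mirror ` occupied_rows p g \<subseteq> {h+1..h+p}" "free_high \<subseteq> {h+1..h+p}"
  using f_occupied g_occupied mirror_range by (force simp: free_low_def free_high_def)+

lemma mirror_occupied_free_disjoint: "mirror ` occupied_rows p g \<inter> free_high = {}"
proof -
  have "inj_on mirror {1..p}" by (rule inj_onI) (auto simp: mirror_def)
  then show ?thesis
    unfolding free_high_def occupied_rows_def by (auto dest: inj_onD)
qed

lemma card_fibre:
  "card {\<sigma> \<in> vesztergombi_perms h p. low_rooks h p \<sigma> = f \<and> high_rooks h p \<sigma> = g} = fact t * fact t"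
proof -
  let ?X = "{1..h+p}"
  have fibre: "{\<sigma> \<in> vesztergombi_perms h p. low_rooks h p \<sigma> = f \<and> high_rooks h p \<sigma> = g} =
      {\<sigma> \<in> ?X \<rightarrow>\<^sub>E ?X. inj_on \<sigma> ?X \<and> (\<forall>a \<in> forced_rows. \<sigma> a = forced a) \<and>
        \<sigma> ` free_low \<subseteq> free_low_values \<and> \<sigma> ` free_high \<subseteq> free_high_values}"
  proof (intro equalityI subsetI)
    fix \<sigma> assume "\<sigma> \<in> {\<sigma> \<in> vesztergombi_perms h p. low_rooks h p \<sigma> = f \<and> high_rooks h p \<sigma> = g}"
    then have \<sigma>: "\<sigma> \<in> vesztergombi_perms h p" "low_rooks h p \<sigma> = f" "high_rooks h p \<sigma> = g" by simp_all
    then have "\<sigma> \<in> ?X \<rightarrow>\<^sub>E ?X" "inj_on \<sigma> ?X" by (simp_all add: vesztergombi_perms_def)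
    with in_fibreD[OF \<sigma>] show "\<sigma> \<in> {\<sigma> \<in> ?X \<rightarrow>\<^sub>E ?X. inj_on \<sigma> ?X \<and> (\<forall>a \<in> forced_rows. \<sigma> a = forced a) \<and>
        \<sigma> ` free_low \<subseteq> free_low_values \<and> \<sigma> ` free_high \<subseteq> free_high_values}" by simp
  next
    fix \<sigma> assume "\<sigma> \<in> {\<sigma> \<in> ?X \<rightarrow>\<^sub>E ?X. inj_on \<sigma> ?X \<and> (\<forall>a \<in> forced_rows. \<sigma> a = forced a) \<and>
        \<sigma> ` free_low \<subseteq> free_low_values \<and> \<sigma> ` free_high \<subseteq> free_high_values}"
    then show "\<sigma> \<in> {\<sigma> \<in> vesztergombi_perms h p. low_rooks h p \<sigma> = f \<and> high_rooks h p \<sigma> = g}"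
      using in_fibreI[of \<sigma>] by simp
  qed
  have "card {\<sigma> \<in> ?X \<rightarrow>\<^sub>E ?X. inj_on \<sigma> ?X \<and> (\<forall>a \<in> forced_rows. \<sigma> a = forced a) \<and>
        \<sigma> ` free_low \<subseteq> free_low_values \<and> \<sigma> ` free_high \<subseteq> free_high_values} =
      fact (card free_low) * fact (card free_high)"
  proof (rule card_injective_extensions)
    show "?X = forced_rows \<union> free_low \<union> free_high"
    proof (intro equalityI subsetI)
      fix a assume a: "a \<in> ?X"
      show "a \<in> forced_rows \<union> free_low \<union> free_high"
      proof (cases "a \<le> h")
        case True
        then show ?thesis using a by (auto simp: forced_rows_def free_low_def occupied_rows_def)
      next
        case False
        then have "a = mirror (mirror a)" "mirror a \<in> {1..p}" using a by (auto simp: mirror_def)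
        then show ?thesis unfolding forced_rows_def free_high_def occupied_rows_def by blast
      qed
    next
      fix a assume "a \<in> forced_rows \<union> free_low \<union> free_high"
      then show "a \<in> ?X" using row_ranges unfolding forced_rows_def by auto
    qed
    show "forced_rows \<inter> free_low = {}" "forced_rows \<inter> free_high = {}" "free_low \<inter> free_high = {}"
      using row_ranges mirror_occupied_free_disjoint
      by (auto simp: forced_rows_def free_low_def occupied_rows_def)
    have "?X = {1..p} \<union> {p+1..h+p}" by auto
    then show "?X = forced ` forced_rows \<union> free_low_values \<union> free_high_values"
      using forced_image_subsets
      unfolding forced_rows_def image_Un free_low_values_def free_high_values_def by blast
    show "forced ` forced_rows \<inter> free_low_values = {}" "forced ` forced_rows \<inter> free_high_values = {}"
      "free_low_values \<inter> free_high_values = {}"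
      using forced_image_subsets
      unfolding forced_rows_def image_Un free_low_values_def free_high_values_def by fastforce+
    show "finite free_low" "finite free_high" "finite free_low_values" "finite free_high_values"
      by (auto simp: free_low_def free_high_def free_low_values_def free_high_values_def)
    show "card free_low = card free_low_values" "card free_high = card free_high_values"
      using card_free_low card_free_high card_free_values by simp_all
    show "inj_on forced forced_rows" by (rule inj_on_forced)
  qed
  then show ?thesis unfolding fibre by (simp add: card_free_low card_free_high)
qed

end


lemma card_vesztergombi_corner_class:
  assumes "t \<le> h" "t \<le> p"
  shows "card {\<sigma> \<in> vesztergombi_perms h p. corner_count h p \<sigma> = t} =
    card (staircase_rooks h (h - t)) * card (staircase_rooks p (p - t)) * (fact t * fact t)"
proof -
  define R where "R = staircase_rooks h (h - t) \<times> staircase_rooks p (p - t)"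
  define fibre where "fibre fg = {\<sigma> \<in> vesztergombi_perms h p. low_rooks h p \<sigma> = fst fg \<and> high_rooks h p \<sigma> = snd fg}"
    for fg
  have "{\<sigma> \<in> vesztergombi_perms h p. corner_count h p \<sigma> = t} = (\<Union>fg \<in> R. fibre fg)"
  proof (intro equalityI subsetI)
    fix \<sigma> assume "\<sigma> \<in> {\<sigma> \<in> vesztergombi_perms h p. corner_count h p \<sigma> = t}"
    then have "\<sigma> \<in> fibre (low_rooks h p \<sigma>, high_rooks h p \<sigma>)" "(low_rooks h p \<sigma>, high_rooks h p \<sigma>) \<in> R"
      using low_rooks_in_staircase_rooks high_rooks_in_staircase_rooks by (auto simp: fibre_def R_def)
    then show "\<sigma> \<in> (\<Union>fg \<in> R. fibre fg)" by blast
  next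
    fix \<sigma> assume "\<sigma> \<in> (\<Union>fg \<in> R. fibre fg)"
    then obtain f g where \<sigma>: "\<sigma> \<in> vesztergombi_perms h p" "low_rooks h p \<sigma> = f" and "f \<in> staircase_rooks h (h - t)"
      by (auto simp: fibre_def R_def)
    then have "h - corner_count h p \<sigma> = h - t"
      using low_rooks_in_staircase_rooks[OF \<sigma>(1)] by (simp add: staircase_rooks_def)
    then show "\<sigma> \<in> {\<sigma> \<in> vesztergombi_perms h p. corner_count h p \<sigma> = t}"
      using \<sigma>(1) corner_count_le[OF \<sigma>(1)] assms by simp
  qed
  moreover have "card (\<Union>fg \<in> R. fibre fg) = (\<Sum>fg \<in> R. card (fibre fg))"
  proof (rule card_UN_disjoint)
    show "finite R" by (simp add: R_def)
    show "\<forall>fg \<in> R. finite (fibre fg)" by (simp add: fibre_def)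
    show "\<forall>fg \<in> R. \<forall>fg' \<in> R. fg \<noteq> fg' \<longrightarrow> fibre fg \<inter> fibre fg' = {}"
      unfolding fibre_def by (auto simp: prod_eq_iff)
  qed
  moreover have "card (fibre fg) = fact t * fact t" if "fg \<in> R" for fg
  proof -
    interpret rook_pair h p t "fst fg" "snd fg"
      using that assms by unfold_locales (auto simp: R_def)
    show ?thesis unfolding fibre_def by (rule card_fibre)
  qed
  ultimately show ?thesis by (simp add: R_def card_cartesian_product)
qed

theorem card_vesztergombi_perms: "card (vesztergombi_perms h p) = polyB h p"
proof -
  have "vesztergombi_perms h p = (\<Union>t \<in> {0..min h p}. {\<sigma> \<in> vesztergombi_perms h p. corner_count h p \<sigma> = t})"
    using corner_count_le by fastforce
  then have "card (vesztergombi_perms h p) =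
      (\<Sum>t = 0..min h p. card {\<sigma> \<in> vesztergombi_perms h p. corner_count h p \<sigma> = t})"
    by (subst card_UN_disjoint[symmetric]) auto
  also have "\<dots> = (\<Sum>t = 0..min h p. (fact t)^2 * Stirling (h + 1) (t + 1) * Stirling (p + 1) (t + 1))"
  proof (rule sum.cong[OF refl])
    fix t assume "t \<in> {0..min h p}"
    then have "t \<le> h" "t \<le> p" "Suc h - (h - t) = t + 1" "Suc p - (p - t) = t + 1" by auto
    then show "card {\<sigma> \<in> vesztergombi_perms h p. corner_count h p \<sigma> = t} =
        (fact t)^2 * Stirling (h + 1) (t + 1) * Stirling (p + 1) (t + 1)"
      by (simp add: card_vesztergombi_corner_class card_staircase_rooks power2_eq_square)
  qed
  finally show ?thesis by (simp add: polyB_def)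
qed

definition site_of_rank :: "nat \<Rightarrow> nat \<Rightarrow> int" where
  "site_of_rank p u = (if u \<le> p then int u else int u - 1)"

definition config_of_perm :: "nat \<Rightarrow> nat \<Rightarrow> (nat \<Rightarrow> nat) \<Rightarrow> nat \<Rightarrow> int" where
  "config_of_perm n p \<sigma> = (\<lambda>a \<in> chips n. site_of_rank p (\<sigma> a))"

definition displacement_bounded :: "nat set \<Rightarrow> (nat \<Rightarrow> int) \<Rightarrow> int \<Rightarrow> int \<Rightarrow> bool" where
  "displacement_bounded W c l r \<longleftrightarrow> (\<forall>a \<in> W. int a - l \<le> c a \<and> c a \<le> int a + r - 1)"

lemma site_of_rank_eq_iff:
  "site_of_rank p u = site_of_rank p v \<longleftrightarrow> v = u \<or> v = Transposition.transpose p (Suc p) u"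
  by (auto simp: site_of_rank_def Transposition.transpose_def)


lemma card_site_of_rank_preimage:
  assumes "1 \<le> p" "p \<le> n"
  shows "card ({u. site_of_rank p u = s} \<inter> {1..n+1}) =
    (if s = int p then 2 else if 1 \<le> s \<and> s \<le> int n then 1 else 0)"
proof -
  consider "s = int p" | "1 \<le> s" "s < int p" | "int p < s" "s \<le> int n" | "s < 1 \<or> int n < s"
    by linarith
  then show ?thesis
  proof cases
    case 1
    then have "{u. site_of_rank p u = s} \<inter> {1..n+1} = {p, Suc p}"
      using assms by (auto simp: site_of_rank_def)
    then show ?thesis using 1 by simp
  next
    case 2
    then have "{u. site_of_rank p u = s} \<inter> {1..n+1} = {nat s}"
      using assms by (auto simp: site_of_rank_def)
    then show ?thesis using 2 assms by simp
  next
    case 3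
    then have "{u. site_of_rank p u = s} \<inter> {1..n+1} = {Suc (nat s)}"
      using assms by (auto simp: site_of_rank_def)
    then show ?thesis using 3 by simp
  next
    case 4
    then have "{u. site_of_rank p u = s} \<inter> {1..n+1} = {}"
      using assms by (auto simp: site_of_rank_def)
    then show ?thesis using 4 assms by auto
  qed
qed

lemma config_of_perm_bounded:
  assumes "1 \<le> p" "p \<le> n" and \<sigma>: "\<sigma> \<in> vesztergombi_perms (n + 1 - p) p"
  shows "config_S n p (config_of_perm n p \<sigma>)"
    "displacement_bounded (chips n) (config_of_perm n p \<sigma>) (int n + 1 - int p) (int p)"
proof -
  let ?c = "config_of_perm n p \<sigma>"
  have X: "chips n = {1..(n + 1 - p) + p}" using assms by (simp add: chips_def)
  have \<sigma>_chip: "1 \<le> \<sigma> a" "\<sigma> a \<le> n + 1" "a \<le> \<sigma> a + (n + 1 - p)" "\<sigma> a \<le> a + p"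
    if "a \<in> chips n" for a
    using vesztergombi_permsD[OF \<sigma>, of a] that X assms by auto
  have "card (chips_at n ?c s) = (if s = int p then 2 else if 1 \<le> s \<and> s \<le> int n then 1 else 0)" for s
  proof -
    have "chips_at n ?c s = {a \<in> {1..(n + 1 - p) + p}. \<sigma> a \<in> {u. site_of_rank p u = s}}"
      by (auto simp: chips_at_def config_of_perm_def X)
    also have "card \<dots> = card ({u. site_of_rank p u = s} \<inter> {1..(n + 1 - p) + p})"
      by (rule card_preimage_vesztergombi[OF \<sigma>])
    finally have "card (chips_at n ?c s) = card ({u. site_of_rank p u = s} \<inter> {1..n+1})"
      using assms by simp
    then show ?thesis using card_site_of_rank_preimage[OF assms(1,2)] by simp
  qed
  moreover have "?c a \<in> {0..int n + 1}" if "a \<in> chips n" for a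
    using \<sigma>_chip[OF that] that by (auto simp: config_of_perm_def site_of_rank_def)
  then have "?c \<in> chips n \<rightarrow>\<^sub>E {0..int n + 1}"
    by (auto simp: config_of_perm_def PiE_iff)
  ultimately show "config_S n p ?c"
    using assms by (simp add: config_S_def)
  show "displacement_bounded (chips n) ?c (int n + 1 - int p) (int p)"
    unfolding displacement_bounded_def
  proof
    fix a assume a: "a \<in> chips n"
    then have "a \<le> n + 1" "1 \<le> a" by (auto simp: chips_def)
    then show "int a - (int n + 1 - int p) \<le> ?c a \<and> ?c a \<le> int a + int p - 1"
      using \<sigma>_chip[OF a] a assms by (auto simp: config_of_perm_def site_of_rank_def)
  qed
qed


lemma finite_chips_at [simp]: "finite (chips_at n c s)"
  by (simp add: chips_at_def chips_def)

lemma config_S_card_chips_at: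
  assumes "config_S n p c" "1 \<le> p" "p \<le> n"
  shows "card (chips_at n c s) = (if s = int p then 2 else if 1 \<le> s \<and> s \<le> int n then 1 else 0)"
proof -
  have c: "c \<in> chips n \<rightarrow>\<^sub>E {0..int n + 1}" "card (chips_at n c 0) = 0"
    "card (chips_at n c (int n + 1)) = 0" "card (chips_at n c (int p)) = 2"
    "\<And>s. s \<in> {1..int n} - {int p} \<Longrightarrow> card (chips_at n c s) = 1"
    using assms(1) unfolding config_S_def by blast+
  consider "s = int p" | "s \<noteq> int p" "1 \<le> s" "s \<le> int n" | "s = 0" | "s = int n + 1"
    | "s < 0 \<or> int n + 1 < s"
    by linarith
  then show ?thesis
  proof cases
    case 5
    have "\<forall>a \<in> chips n. c a \<in> {0..int n + 1}" using c(1) by (simp add: PiE_iff)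
    then have "chips_at n c s = {}" using 5 by (auto simp: chips_at_def)
    then show ?thesis using 5 assms(2,3) by auto
  qed (use c assms(2,3) in simp_all)
qed

lemma config_S_site_range:
  assumes "config_S n p c" "1 \<le> p" "p \<le> n" "a \<in> chips n"
  shows "1 \<le> c a \<and> c a \<le> int n"
proof -
  have "a \<in> chips_at n c (c a)" using assms(4) by (simp add: chips_at_def)
  then have "card (chips_at n c (c a)) \<noteq> 0" by auto
  then show ?thesis using config_S_card_chips_at[OF assms(1-3), of "c a"] assms(2,3)
    by (auto split: if_splits)
qed

lemma config_S_single_chip:
  assumes "config_S n p c" "1 \<le> p" "p \<le> n" "a \<in> chips n" "b \<in> chips n" "c a = c b" "c a \<noteq> int p"
  shows "a = b"
proof -
  have "card (chips_at n c (c a)) = 1"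
    using config_S_card_chips_at[OF assms(1-3)] config_S_site_range[OF assms(1-4)] assms(7) by simp
  moreover have "a \<in> chips_at n c (c a)" "b \<in> chips_at n c (c a)"
    using assms(4-6) by (auto simp: chips_at_def)
  ultimately show ?thesis by (metis card_1_singletonE singletonD)
qed

lemma config_S_double_site:
  assumes "config_S n p c"
  obtains x y where "chips_at n c (int p) = {x, y}" "x < y"
proof -
  have "card (chips_at n c (int p)) = 2" using assms by (simp add: config_S_def)
  then obtain x y where "chips_at n c (int p) = {x, y}" "x \<noteq> y" by (meson card_2_iff)
  then show ?thesis using that by (metis insert_commute linorder_neq_iff)
qed

definition perm_of_config :: "nat \<Rightarrow> nat \<Rightarrow> (nat \<Rightarrow> int) \<Rightarrow> nat \<Rightarrow> nat" where
  "perm_of_config n p c = (\<lambda>a \<in> chips n. nat (c a) +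
     (if int p < c a \<or> (c a = int p \<and> (\<exists>b \<in> chips_at n c (int p). b < a)) then 1 else 0))"

lemma perm_of_config:
  assumes c: "config_S n p c" "displacement_bounded (chips n) c (int n + 1 - int p) (int p)"
    and p: "1 \<le> p" "p \<le> n"
  shows "perm_of_config n p c \<in> vesztergombi_perms (n + 1 - p) p"
    "config_of_perm n p (perm_of_config n p c) = c"
proof -
  let ?\<sigma> = "perm_of_config n p c"
  have X: "{1..(n + 1 - p) + p} = chips n" using p by (simp add: chips_def)
  obtain x y where xy: "chips_at n c (int p) = {x, y}" "x < y" using config_S_double_site[OF c(1)] .
  have range: "1 \<le> c a \<and> c a \<le> int n" if "a \<in> chips n" for a
    using config_S_site_range[OF c(1) p that] .
  have \<sigma>: "?\<sigma> a = nat (c a) + (if int p < c a \<or> (c a = int p \<and> a = y) then 1 else 0)"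
    if "a \<in> chips n" for a
  proof -
    have "(\<exists>b \<in> chips_at n c (int p). b < a) \<longleftrightarrow> a = y" if "c a = int p"
    proof -
      have "a \<in> chips_at n c (int p)" using that \<open>a \<in> chips n\<close> by (simp add: chips_at_def)
      then show ?thesis using xy by auto
    qed
    then have "(int p < c a \<or> (c a = int p \<and> (\<exists>b \<in> chips_at n c (int p). b < a))) \<longleftrightarrow>
        (int p < c a \<or> (c a = int p \<and> a = y))" by blast
    then show ?thesis using that unfolding perm_of_config_def by simp
  qed
  have site: "site_of_rank p (?\<sigma> a) = c a" if "a \<in> chips n" for a
    using range[OF that] \<sigma>[OF that] by (auto simp: site_of_rank_def)
  have "inj_on ?\<sigma> (chips n)"
  proof (rule inj_onI)
    fix a b assume ab: "a \<in> chips n" "b \<in> chips n" "?\<sigma> a = ?\<sigma> b"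
    then have "c a = c b" using site by metis
    show "a = b"
    proof (cases "c a = int p")
      case True
      then have "a \<in> {x, y}" "b \<in> {x, y}"
        using ab \<open>c a = c b\<close> xy(1) by (auto simp: chips_at_def)
      moreover have "?\<sigma> a = p + (if a = y then 1 else 0)" "?\<sigma> b = p + (if b = y then 1 else 0)"
        using \<sigma>[OF ab(1)] \<sigma>[OF ab(2)] True \<open>c a = c b\<close> by auto
      ultimately show ?thesis using ab(3) xy(2) by (auto split: if_splits)
    qed (use config_S_single_chip[OF c(1) p ab(1,2) \<open>c a = c b\<close>] in simp)
  qed
  moreover have "?\<sigma> a \<in> chips n \<and> a \<le> ?\<sigma> a + (n + 1 - p) \<and> ?\<sigma> a \<le> a + p"
    if "a \<in> chips n" for a
  proof -
    have "int a - (int n + 1 - int p) \<le> c a" "c a \<le> int a + int p - 1"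
      using c(2) that by (auto simp: displacement_bounded_def)
    moreover have "c a \<le> int (?\<sigma> a)" "int (?\<sigma> a) \<le> c a + 1"
      using \<sigma>[OF that] range[OF that] by (simp_all split: if_split)
    ultimately have "1 \<le> int (?\<sigma> a)" "int (?\<sigma> a) \<le> int n + 1"
      "int a \<le> int (?\<sigma> a) + (int n + 1 - int p)" "int (?\<sigma> a) \<le> int a + int p"
      using range[OF that] by auto
    then show ?thesis using p by (simp add: chips_def)
  qed
  moreover have "?\<sigma> \<in> extensional (chips n)" by (simp add: perm_of_config_def)
  ultimately show "?\<sigma> \<in> vesztergombi_perms (n + 1 - p) p"
    unfolding vesztergombi_perms_def X by (simp add: PiE_iff)
  have "c \<in> extensional (chips n)" using c(1) by (simp add: config_S_def PiE_iff)
  then show "config_of_perm n p ?\<sigma> = c"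
    using site by (auto simp: config_of_perm_def extensional_def)
qed


definition swap_ranks :: "nat \<Rightarrow> nat \<Rightarrow> (nat \<Rightarrow> nat) \<Rightarrow> nat \<Rightarrow> nat" where
  "swap_ranks N p \<sigma> = (\<lambda>a \<in> {1..N}. Transposition.transpose p (Suc p) (\<sigma> a))"

lemma swap_ranks_vesztergombi:
  assumes "1 \<le> h" "1 \<le> p" and \<sigma>: "\<sigma> \<in> vesztergombi_perms h p"
  shows "swap_ranks (h + p) p \<sigma> \<in> vesztergombi_perms h p"
proof -
  let ?\<tau> = "swap_ranks (h + p) p \<sigma>"
  have \<tau>: "?\<tau> a = Transposition.transpose p (Suc p) (\<sigma> a)" if "a \<in> {1..h+p}" for a
    using that by (simp add: swap_ranks_def)
  have "inj_on ?\<tau> {1..h+p}"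
  proof (rule inj_onI)
    fix a b assume ab: "a \<in> {1..h+p}" "b \<in> {1..h+p}" "?\<tau> a = ?\<tau> b"
    then have "Transposition.transpose p (Suc p) (\<sigma> a) = Transposition.transpose p (Suc p) (\<sigma> b)"
      by (simp add: \<tau>)
    then have "\<sigma> a = \<sigma> b" by (rule transpose_eq_imp_eq)
    then show "a = b" using \<sigma> ab(1,2) by (auto simp: vesztergombi_perms_def dest: inj_onD)
  qed
  moreover have "?\<tau> a \<in> {1..h+p} \<and> a \<le> ?\<tau> a + h \<and> ?\<tau> a \<le> a + p" if "a \<in> {1..h+p}" for a
  proof -
    have "?\<tau> a = Suc p \<or> ?\<tau> a = p \<or> ?\<tau> a = \<sigma> a"
      by (simp add: \<tau>[OF that] Transposition.transpose_def)
    then show ?thesis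
      using vesztergombi_permsD[OF \<sigma> that] that assms(1,2) by fastforce
  qed
  moreover have "?\<tau> \<in> extensional {1..h+p}" by (simp add: swap_ranks_def)
  ultimately show ?thesis by (simp add: vesztergombi_perms_def PiE_iff)
qed

lemma config_of_perm_swap_ranks:
  "config_of_perm n p (swap_ranks (n + 1) p \<sigma>) = config_of_perm n p \<sigma>"
proof
  fix a
  have "site_of_rank p (Transposition.transpose p (Suc p) u) = site_of_rank p u" for u
    using site_of_rank_eq_iff by metis
  then show "config_of_perm n p (swap_ranks (n + 1) p \<sigma>) a = config_of_perm n p \<sigma> a"
    by (simp add: config_of_perm_def swap_ranks_def chips_def)
qed

lemma vesztergombi_perms_on_chips:
  assumes "p \<le> n" "\<sigma> \<in> vesztergombi_perms (n + 1 - p) p"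
  shows "\<sigma> \<in> chips n \<rightarrow>\<^sub>E chips n" "inj_on \<sigma> (chips n)" "\<sigma> ` chips n = chips n"
proof -
  have "{1..(n + 1 - p) + p} = chips n" using assms(1) by (simp add: chips_def)
  then show \<sigma>: "\<sigma> \<in> chips n \<rightarrow>\<^sub>E chips n" and inj: "inj_on \<sigma> (chips n)"
    using assms(2) unfolding vesztergombi_perms_def by auto
  have "\<sigma> ` chips n \<subseteq> chips n" using \<sigma> by (simp add: PiE_iff image_subset_iff)
  then show "\<sigma> ` chips n = chips n" using inj by (simp add: endo_inj_surj chips_def)
qed

lemma vesztergombi_perms_obtain_rank:
  assumes "p \<le> n" "\<sigma> \<in> vesztergombi_perms (n + 1 - p) p" "u \<in> chips n"
  obtains a where "a \<in> chips n" "\<sigma> a = u"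
  using vesztergombi_perms_on_chips(3)[OF assms(1,2)] assms(3) by (metis imageE)

lemma config_of_perm_fibre:
  assumes p: "1 \<le> p" "p \<le> n" and \<sigma>: "\<sigma> \<in> vesztergombi_perms (n + 1 - p) p"
  shows "{\<tau> \<in> vesztergombi_perms (n + 1 - p) p. config_of_perm n p \<tau> = config_of_perm n p \<sigma>} =
    {\<sigma>, swap_ranks (n + 1) p \<sigma>}"
proof (intro equalityI subsetI)
  let ?h = "n + 1 - p"
  have X: "{1..?h + p} = chips n" using p by (simp add: chips_def)
  have sw: "swap_ranks (n + 1) p \<sigma> = swap_ranks (?h + p) p \<sigma>" using p by simp
  fix \<tau> assume "\<tau> \<in> {\<tau> \<in> vesztergombi_perms ?h p. config_of_perm n p \<tau> = config_of_perm n p \<sigma>}"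
  then have \<tau>: "\<tau> \<in> vesztergombi_perms ?h p" and "config_of_perm n p \<tau> = config_of_perm n p \<sigma>" by auto
  have alt: "\<tau> a = \<sigma> a \<or> \<tau> a = Transposition.transpose p (Suc p) (\<sigma> a)" if "a \<in> chips n" for a
  proof -
    have "site_of_rank p (\<sigma> a) = site_of_rank p (\<tau> a)"
      using fun_cong[OF \<open>config_of_perm n p \<tau> = config_of_perm n p \<sigma>\<close>, of a] that
      by (simp add: config_of_perm_def)
    then show ?thesis by (simp add: site_of_rank_eq_iff)
  qed
  have inj: "inj_on \<sigma> (chips n)" "inj_on \<tau> (chips n)"
    using vesztergombi_perms_on_chips(2)[OF p(2)] \<sigma> \<tau> by simp_all
  have "p \<in> chips n" using p by (simp add: chips_def)
  then obtain \<alpha> where \<alpha>: "\<alpha> \<in> chips n" "\<sigma> \<alpha> = p"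
    using vesztergombi_perms_obtain_rank[OF p(2) \<sigma>] by blast
  have ext: "\<sigma> \<in> extensional (chips n)" "\<tau> \<in> extensional (chips n)"
    using vesztergombi_perms_on_chips(1)[OF p(2)] \<sigma> \<tau> by (simp_all add: PiE_iff)
  show "\<tau> \<in> {\<sigma>, swap_ranks (n + 1) p \<sigma>}"
  proof (cases "\<tau> \<alpha> = p")
    case True
    have "\<tau> a = \<sigma> a" if a: "a \<in> chips n" for a
    proof (rule ccontr)
      assume ne: "\<tau> a \<noteq> \<sigma> a"
      then have t: "\<tau> a = Transposition.transpose p (Suc p) (\<sigma> a)" using alt[OF a] by simp
      show False
      proof (cases "\<sigma> a = p")
        case True
        then have "a = \<alpha>" using inj_onD[OF inj(1), of a \<alpha>] a \<alpha> by simp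
        then show False using ne True \<open>\<tau> \<alpha> = p\<close> \<alpha> by simp
      next
        case False
        then have "\<sigma> a = Suc p" using t ne by (auto simp: Transposition.transpose_def split: if_splits)
        then have "a = \<alpha>" using inj_onD[OF inj(2), of a \<alpha>] t a \<alpha> \<open>\<tau> \<alpha> = p\<close> by simp
        then show False using \<open>\<sigma> a = Suc p\<close> \<alpha> by simp
      qed
    qed
    then have "\<tau> = \<sigma>" using extensionalityI[OF ext(2,1)] by blast
    then show ?thesis by simp
  next
    case False
    then have "\<tau> \<alpha> = Suc p" using alt[OF \<alpha>(1)] \<alpha>(2) by simp
    have "\<tau> a = Transposition.transpose p (Suc p) (\<sigma> a)" if a: "a \<in> chips n" for a
    proof (rule ccontr)
      assume ne: "\<tau> a \<noteq> Transposition.transpose p (Suc p) (\<sigma> a)"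
      then have t: "\<tau> a = \<sigma> a" using alt[OF a] by simp
      show False
      proof (cases "\<sigma> a = p")
        case True
        then have "a = \<alpha>" using inj_onD[OF inj(1), of a \<alpha>] a \<alpha> by simp
        then show False using t True \<open>\<tau> \<alpha> = Suc p\<close> \<alpha> by simp
      next
        case False
        then have "\<sigma> a = Suc p" using t ne by (auto simp: Transposition.transpose_def split: if_splits)
        then have "a = \<alpha>" using inj_onD[OF inj(2), of a \<alpha>] t a \<alpha> \<open>\<tau> \<alpha> = Suc p\<close> by simp
        then show False using \<open>\<sigma> a = Suc p\<close> \<alpha> by simp
      qed
    qed
    moreover have "swap_ranks (n + 1) p \<sigma> \<in> extensional (chips n)"
      by (simp add: swap_ranks_def chips_def)
    ultimately have "\<tau> = swap_ranks (n + 1) p \<sigma>"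
      using extensionalityI[OF ext(2)] by (simp add: swap_ranks_def chips_def)
    then show ?thesis by simp
  qed
next
  fix \<tau> assume "\<tau> \<in> {\<sigma>, swap_ranks (n + 1) p \<sigma>}"
  moreover have "swap_ranks (n + 1) p \<sigma> \<in> vesztergombi_perms (n + 1 - p) p"
    using swap_ranks_vesztergombi[OF _ p(1) \<sigma>] p by simp
  ultimately show "\<tau> \<in> {\<tau> \<in> vesztergombi_perms (n + 1 - p) p. config_of_perm n p \<tau> = config_of_perm n p \<sigma>}"
    using \<sigma> config_of_perm_swap_ranks by safe simp_all
qed


lemma swap_ranks_neq:
  assumes "1 \<le> p" "p \<le> n" "\<sigma> \<in> vesztergombi_perms (n + 1 - p) p"
  shows "swap_ranks (n + 1) p \<sigma> \<noteq> \<sigma>"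
proof -
  have "p \<in> chips n" using assms(1,2) by (simp add: chips_def)
  then obtain \<alpha> where "\<alpha> \<in> chips n" "\<sigma> \<alpha> = p"
    using vesztergombi_perms_obtain_rank[OF assms(2,3)] by blast
  then have "swap_ranks (n + 1) p \<sigma> \<alpha> \<noteq> \<sigma> \<alpha>" by (simp add: swap_ranks_def chips_def)
  then show ?thesis by metis
qed

theorem card_bounded_configs:
  assumes p: "1 \<le> p" "p \<le> n"
  shows "2 * card {c. config_S n p c \<and> displacement_bounded (chips n) c (int n + 1 - int p) (int p)} =
    polyB (n + 1 - p) p"
proof -
  let ?B = "{c. config_S n p c \<and> displacement_bounded (chips n) c (int n + 1 - int p) (int p)}"
  let ?V = "vesztergombi_perms (n + 1 - p) p"
  define fibre where "fibre c = {\<sigma> \<in> ?V. config_of_perm n p \<sigma> = c}" for c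
  have "?V = (\<Union>c \<in> ?B. fibre c)"
    using config_of_perm_bounded[OF p] by (auto simp: fibre_def)
  moreover have "card (\<Union>c \<in> ?B. fibre c) = (\<Sum>c \<in> ?B. card (fibre c))"
  proof (rule card_UN_disjoint)
    show "finite ?B"
      by (rule finite_subset[of _ "chips n \<rightarrow>\<^sub>E {0..int n + 1}"])
        (auto simp: config_S_def chips_def finite_PiE)
  qed (auto simp: fibre_def)
  ultimately have "card ?V = (\<Sum>c \<in> ?B. card (fibre c))" by simp
  also have "\<dots> = (\<Sum>c \<in> ?B. 2)"
  proof (rule sum.cong[OF refl])
    fix c assume "c \<in> ?B"
    then have \<sigma>: "perm_of_config n p c \<in> ?V" "config_of_perm n p (perm_of_config n p c) = c"
      using perm_of_config p by auto
    then show "card (fibre c) = 2"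
      using config_of_perm_fibre[OF p \<sigma>(1)] swap_ranks_neq[OF p \<sigma>(1)] by (simp add: fibre_def)
  qed
  finally show ?thesis using card_vesztergombi_perms by simp
qed

lemma finite_chips [simp]: "finite (chips n)" and card_chips [simp]: "card (chips n) = n + 1"
  by (simp_all add: chips_def)

definition count_upto :: "nat \<Rightarrow> (nat \<Rightarrow> int) \<Rightarrow> int \<Rightarrow> nat" where
  "count_upto n c j = card {a \<in> chips n. c a \<le> j}"

(* Every initial segment of sites 0..j holds j or j + 1 chips.  This forces at most two chips
   per site, so two topplings at the same site move the same pair of chips. *)
definition balanced :: "nat \<Rightarrow> (nat \<Rightarrow> int) \<Rightarrow> bool" where
  "balanced n c \<longleftrightarrow> (\<forall>a \<in> chips n. 0 \<le> c a \<and> c a \<le> int n + 1) \<and>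
     (\<forall>j \<in> {-1..int n + 1}. int (count_upto n c j) = j \<or> int (count_upto n c j) = j + 1)"

definition stable :: "nat \<Rightarrow> (nat \<Rightarrow> int) \<Rightarrow> bool" where
  "stable n c \<longleftrightarrow> (\<nexists>c'. topple_step n c c')"

lemma count_upto_split: "count_upto n c j = count_upto n c (j - 1) + card (chips_at n c j)"
proof -
  have "{a \<in> chips n. c a \<le> j} = {a \<in> chips n. c a \<le> j - 1} \<union> chips_at n c j"
    by (auto simp: chips_at_def)
  moreover have "{a \<in> chips n. c a \<le> j - 1} \<inter> chips_at n c j = {}"
    by (auto simp: chips_at_def)
  ultimately show ?thesis
    unfolding count_upto_def by (simp add: card_Un_disjoint chips_def)
qed

lemma balanced_pair:
  assumes bal: "balanced n c" and ab: "\<alpha> \<in> chips n" "\<beta> \<in> chips n" "\<alpha> \<noteq> \<beta>" "c \<alpha> = i" "c \<beta> = i"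
  shows "chips_at n c i = {\<alpha>, \<beta>}" "1 \<le> i" "i \<le> int n"
    "int (count_upto n c (i - 1)) = i - 1" "int (count_upto n c i) = i + 1"
proof -
  have range: "0 \<le> i" "i \<le> int n + 1" using bal ab by (auto simp: balanced_def)
  have count: "int (count_upto n c j) \<in> {j, j + 1}" if "j \<in> {-1..int n + 1}" for j
    using bal that by (auto simp: balanced_def)
  have sub: "{\<alpha>, \<beta>} \<subseteq> chips_at n c i" using ab by (auto simp: chips_at_def)
  then have "2 \<le> card (chips_at n c i)"
    using ab(3) card_mono[OF finite_chips_at sub] by simp
  moreover have "int (count_upto n c i) \<le> i + 1" "i - 1 \<le> int (count_upto n c (i - 1))"
    using count[of i] count[of "i - 1"] range by auto
  ultimately have two: "card (chips_at n c i) = 2"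
    and below: "int (count_upto n c (i - 1)) = i - 1" and upto: "int (count_upto n c i) = i + 1"
    using count_upto_split[of n c i] by linarith+
  show "chips_at n c i = {\<alpha>, \<beta>}"
    using sub two ab(3) by (metis card_2_iff card_subset_eq finite_chips_at)
  show "int (count_upto n c (i - 1)) = i - 1" "int (count_upto n c i) = i + 1" by fact+
  show "1 \<le> i"
  proof (rule ccontr)
    assume "\<not> 1 \<le> i"
    then have "{a \<in> chips n. c a \<le> i - 1} = {}" using bal range by (auto simp: balanced_def)
    then show False using below range \<open>\<not> 1 \<le> i\<close> by (simp add: count_upto_def)
  qed
  show "i \<le> int n"
  proof (rule ccontr)
    assume "\<not> i \<le> int n"
    then have "int (count_upto n c i) \<le> int n + 1"
      unfolding count_upto_def using card_mono[OF finite_chips[of n], of "{a \<in> chips n. c a \<le> i}"] by auto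
    then show False using upto \<open>\<not> i \<le> int n\<close> by simp
  qed
qed


lemma count_upto_topple:
  assumes "\<alpha> \<in> chips n" "\<beta> \<in> chips n" "\<alpha> \<noteq> \<beta>" "c \<alpha> = i" "c \<beta> = i"
  shows "int (count_upto n (c(\<alpha> := i - 1, \<beta> := i + 1)) j) =
    int (count_upto n c j) + (if j = i - 1 then 1 else 0) - (if j = i then 1 else 0)"
proof -
  let ?c' = "c(\<alpha> := i - 1, \<beta> := i + 1)"
  define S where "S = {a \<in> chips n. c a \<le> j}"
  define S' where "S' = {a \<in> chips n. ?c' a \<le> j}"
  have fin: "finite S" by (simp add: S_def)
  consider "j < i - 1" | "j = i - 1" | "j = i" | "i < j" by linarith
  then show ?thesis
  proof cases
    case 2
    then have "S' = insert \<alpha> S" "\<alpha> \<notin> S" using assms by (auto simp: S_def S'_def)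
    then show ?thesis using 2 fin by (simp add: count_upto_def S_def S'_def)
  next
    case 3
    then have "S' = S - {\<beta>}" "\<beta> \<in> S" using assms by (auto simp: S_def S'_def)
    moreover have "0 < card S" using \<open>\<beta> \<in> S\<close> fin card_gt_0_iff by blast
    ultimately have "int (card S') = int (card S) - 1" using fin by (simp add: of_nat_diff)
    then show ?thesis using 3 by (simp add: count_upto_def S_def S'_def)
  next
    case 1
    then have "S' = S" using assms by (auto simp: S_def S'_def)
    then show ?thesis using 1 by (simp add: count_upto_def S_def S'_def)
  next
    case 4
    then have "S' = S" using assms by (auto simp: S_def S'_def)
    then show ?thesis using 4 by (simp add: count_upto_def S_def S'_def)
  qed
qed

lemma topple_step_balanced:
  assumes bal: "balanced n c" and step: "topple_step n c c'"
  shows "balanced n c'"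
proof -
  obtain \<alpha> \<beta> where ab: "\<alpha> \<in> chips n" "\<beta> \<in> chips n" "\<alpha> < \<beta>" "c \<alpha> = c \<beta>"
    and c': "c' = c(\<alpha> := c \<alpha> - 1, \<beta> := c \<beta> + 1)"
    using step unfolding topple_step_def by blast
  define i where "i = c \<alpha>"
  have ne: "\<alpha> \<noteq> \<beta>" and ci: "c \<alpha> = i" "c \<beta> = i" using ab by (auto simp: i_def)
  note pair = balanced_pair[OF bal ab(1,2) ne ci]
  have c'': "c' = c(\<alpha> := i - 1, \<beta> := i + 1)" using c' ci by simp
  have "\<forall>a \<in> chips n. 0 \<le> c' a \<and> c' a \<le> int n + 1"
    using bal pair(2,3) by (auto simp: balanced_def c'')
  moreover have "int (count_upto n c' j) = j \<or> int (count_upto n c' j) = j + 1"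
    if "j \<in> {-1..int n + 1}" for j
    using count_upto_topple[OF ab(1,2) ne ci, of j] bal that pair(4,5)
    unfolding c'' balanced_def by auto
  ultimately show ?thesis by (simp add: balanced_def)
qed

lemma topple_steps_balanced:
  "(topple_step n)\<^sup>*\<^sup>* c c' \<Longrightarrow> balanced n c \<Longrightarrow> balanced n c'"
  by (induction rule: rtranclp_induct) (auto intro: topple_step_balanced)


lemma topple_step_iff:
  "topple_step n c c' \<longleftrightarrow> (\<exists>\<alpha> \<in> chips n. \<exists>\<beta> \<in> chips n. \<alpha> < \<beta> \<and> c \<alpha> = c \<beta> \<and>
     c' = c(\<alpha> := c \<alpha> - 1, \<beta> := c \<beta> + 1))"
  by (simp add: topple_step_def)

lemma strong_confluentp_balanced_topple:
  "strong_confluentp (\<lambda>c c'. balanced n c \<and> topple_step n c c')"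
proof
  fix c c1 c2
  assume 1: "balanced n c \<and> topple_step n c c1" and 2: "balanced n c \<and> topple_step n c c2"
  then obtain \<alpha>1 \<beta>1 \<alpha>2 \<beta>2 where
    s1: "\<alpha>1 \<in> chips n" "\<beta>1 \<in> chips n" "\<alpha>1 < \<beta>1" "c \<alpha>1 = c \<beta>1" "c1 = c(\<alpha>1 := c \<alpha>1 - 1, \<beta>1 := c \<beta>1 + 1)"
    and s2: "\<alpha>2 \<in> chips n" "\<beta>2 \<in> chips n" "\<alpha>2 < \<beta>2" "c \<alpha>2 = c \<beta>2" "c2 = c(\<alpha>2 := c \<alpha>2 - 1, \<beta>2 := c \<beta>2 + 1)"
    unfolding topple_step_def by blast
  let ?R = "\<lambda>c c'. balanced n c \<and> topple_step n c c'"
  have bal: "balanced n c1" "balanced n c2" using 1 2 topple_step_balanced by blast+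
  show "\<exists>u. ?R\<^sup>*\<^sup>* c1 u \<and> ?R\<^sup>=\<^sup>= c2 u"
  proof (cases "c \<alpha>1 = c \<alpha>2")
    case True
    \<comment> \<open>Both topplings use the unique pair of chips on that site.\<close>
    have "{\<alpha>1, \<beta>1} = {\<alpha>2, \<beta>2}"
      using balanced_pair(1)[OF _ s1(1,2) _ refl] balanced_pair(1)[OF _ s2(1,2) _ refl] 1 s1 s2 True
      by (metis order_less_irrefl)
    then have "\<alpha>1 = \<alpha>2 \<and> \<beta>1 = \<beta>2" using s1(3) s2(3) by (metis doubleton_eq_iff order_less_asym)
    then show ?thesis using s1 s2 by auto
  next
    case False
    then have d: "\<alpha>1 \<noteq> \<alpha>2" "\<alpha>1 \<noteq> \<beta>2" "\<beta>1 \<noteq> \<alpha>2" "\<beta>1 \<noteq> \<beta>2" using s1(4) s2(4) by auto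
    define c3 where "c3 = c(\<alpha>1 := c \<alpha>1 - 1, \<beta>1 := c \<beta>1 + 1, \<alpha>2 := c \<alpha>2 - 1, \<beta>2 := c \<beta>2 + 1)"
    have "topple_step n c1 c3"
      unfolding topple_step_iff using s1 s2 d by (intro bexI[of _ \<alpha>2] bexI[of _ \<beta>2]) (auto simp: c3_def)
    moreover have "topple_step n c2 c3"
      unfolding topple_step_iff using s1 s2 d
      by (intro bexI[of _ \<alpha>1] bexI[of _ \<beta>1]) (auto simp: c3_def fun_upd_twist)
    ultimately show ?thesis using bal by blast
  qed
qed

lemma topple_steps_balanced_rtranclp:
  assumes "(topple_step n)\<^sup>*\<^sup>* c d" "balanced n c"
  shows "(\<lambda>c c'. balanced n c \<and> topple_step n c c')\<^sup>*\<^sup>* c d"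
  using assms
proof (induction rule: rtranclp_induct)
  case (step d d')
  then show ?case using topple_steps_balanced[OF step(1)]
    by (metis (no_types, lifting) rtranclp.rtrancl_into_rtrancl)
qed simp

lemma stable_steps_eq: "(topple_step n)\<^sup>*\<^sup>* c d \<Longrightarrow> stable n c \<Longrightarrow> d = c"
  by (induction rule: converse_rtranclp_induct) (auto simp: stable_def)

lemma balanced_stable_unique:
  assumes "balanced n c" "(topple_step n)\<^sup>*\<^sup>* c d1" "(topple_step n)\<^sup>*\<^sup>* c d2" "stable n d1" "stable n d2"
  shows "d1 = d2"
proof -
  let ?R = "\<lambda>c c'. balanced n c \<and> topple_step n c c'"
  obtain u where "?R\<^sup>*\<^sup>* d1 u" "?R\<^sup>*\<^sup>* d2 u"
    using confluentpD[OF strong_confluentp_imp_confluentp[OF strong_confluentp_balanced_topple]]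
      topple_steps_balanced_rtranclp assms(1-3) by blast
  then have "(topple_step n)\<^sup>*\<^sup>* d1 u" "(topple_step n)\<^sup>*\<^sup>* d2 u"
    by (auto elim: rtranclp_mono[THEN predicate2D, rotated])
  then show ?thesis using stable_steps_eq assms(4,5) by metis
qed

lemma identity_final_stable: "identity_final n c \<Longrightarrow> stable n c"
  unfolding stable_def topple_step_def identity_final_def by fastforce

lemma toppleable_iff_stable_identity:
  assumes "balanced n c" "(topple_step n)\<^sup>*\<^sup>* c d" "stable n d"
  shows "toppleable n c \<longleftrightarrow> identity_final n d"
  using balanced_stable_unique[OF assms(1) _ assms(2) identity_final_stable assms(3)] assms(2)
  by (auto simp: toppleable_def)


lemma config_S_count_upto:
  assumes "config_S n p c" "1 \<le> p" "p \<le> n"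
  shows "int (count_upto n c (int k - 1)) =
    (if k = 0 then 0 else if int k \<le> int p then int k - 1 else if int k \<le> int n + 1 then int k else int n + 1)"
proof (induction k)
  case 0
  have "\<forall>a \<in> chips n. 0 \<le> c a" using assms(1) by (auto simp: config_S_def PiE_iff)
  then show ?case by (auto simp: count_upto_def)
next
  case (Suc k)
  have "count_upto n c (int (Suc k) - 1) = count_upto n c (int k - 1) + card (chips_at n c (int k))"
    using count_upto_split[of n c "int k"] by simp
  then show ?case
    using Suc.IH config_S_card_chips_at[OF assms, of "int k"] assms(2,3) by auto
qed

lemma config_S_balanced:
  assumes "config_S n p c" "1 \<le> p" "p \<le> n"
  shows "balanced n c"
proof -
  have "\<forall>a \<in> chips n. 0 \<le> c a \<and> c a \<le> int n + 1" using assms(1) by (auto simp: config_S_def PiE_iff)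
  moreover have "int (count_upto n c j) = j \<or> int (count_upto n c j) = j + 1" if "j \<in> {-1..int n + 1}" for j
    using config_S_count_upto[OF assms, of "nat (j + 1)"] that by auto
  ultimately show ?thesis by (simp add: balanced_def)
qed

definition chips_between :: "nat \<Rightarrow> (nat \<Rightarrow> int) \<Rightarrow> int \<Rightarrow> int \<Rightarrow> nat set" where
  "chips_between n c l k = {a \<in> chips n. l \<le> c a \<and> c a \<le> k}"

lemma finite_chips_between [simp]: "finite (chips_between n c l k)"
  by (simp add: chips_between_def)

lemma chips_at_fun_upd2:
  assumes "x \<noteq> y"
  shows "chips_at n (c(x := u, y := v)) s =
    chips_at n c s - {x, y} \<union> {z \<in> {x} \<inter> chips n. s = u} \<union> {z \<in> {y} \<inter> chips n. s = v}"
  using assms by (auto simp: chips_at_def)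

lemma topple_step_pair:
  assumes "chips_at n c k = {x, y}" "x < y"
  shows "topple_step n c (c(x := k - 1, y := k + 1))"
proof -
  have "x \<in> chips n" "y \<in> chips n" "c x = k" "c y = k" using assms(1) by (auto simp: chips_at_def)
  then show ?thesis using assms(2) unfolding topple_step_iff by (intro bexI[of _ x] bexI[of _ y]) auto
qed

lemma Min_Diff_greater:
  assumes "finite B" "x \<in> B" "x < (y::nat)"
  shows "Min (B - {y}) = Min B"
proof -
  have "Min B \<le> x" using assms by simp
  then have "Min B \<noteq> y" using assms(3) by simp
  moreover have "Min B \<in> B" using assms(1,2) Min_in by auto
  ultimately have "Min B \<in> B - {y}" by simp
  then show ?thesis using assms(1) by (metis Diff_subset Min_antimono Min_le antisym finite_Diff empty_iff)
qed

lemma card_fibre_bij_betw: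
  assumes "bij_betw f A S" "s \<in> S"
  shows "card {a \<in> A. f a = s} = 1"
proof -
  obtain a where "a \<in> A" "f a = s" using assms by (auto simp: bij_betw_def)
  moreover have "a' = a" if "a' \<in> A" "f a' = s" for a'
    using that \<open>a \<in> A\<close> \<open>f a = s\<close> assms(1) by (metis bij_betw_def inj_onD)
  ultimately have "{a' \<in> A. f a' = s} = {a}" by blast
  then show ?thesis by simp
qed

(* The outcome of toppling a double site k leftwards through single sites l..k - 1 down to the
   empty site l - 1: the smallest chip of the block reaches l - 1 and the others fill l + 1..k + 1.
   The last clause records that a chip which does not simply step right ends at least as far
   left as it started, with at least k + 1 - d a larger chips of the block.  *)
definition cascade_outcome :: "nat \<Rightarrow> (nat \<Rightarrow> int) \<Rightarrow> int \<Rightarrow> int \<Rightarrow> (nat \<Rightarrow> int) \<Rightarrow> bool" where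
  "cascade_outcome n c l k d \<longleftrightarrow>
     (let B = chips_between n c l k; \<mu> = Min B in
      (topple_step n)\<^sup>*\<^sup>* c d \<and> (\<forall>a. a \<notin> B \<longrightarrow> d a = c a) \<and> d \<mu> = l - 1 \<and>
      bij_betw d (B - {\<mu>}) {l+1..k+1} \<and>
      (\<forall>a \<in> B - {\<mu>}. d a = c a + 1 \<or>
         (d a \<le> c a \<and> (\<forall>b \<in> chips_at n c k. a \<le> b) \<and> k + 1 - d a \<le> int (card {b \<in> B. a < b}))))"


lemma cascade_outcome_single_site:
  assumes xy: "chips_at n c k = {x, y}" "x < y"
  shows "cascade_outcome n c k k (c(x := k - 1, y := k + 1))"
proof -
  let ?d = "c(x := k - 1, y := k + 1)"
  have "chips_between n c k k = chips_at n c k"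
    by (auto simp: chips_between_def chips_at_def)
  then have B: "chips_between n c k k = {x, y}" using xy(1) by simp
  have \<mu>: "Min {x, y} = x" using xy(2) by simp
  have rest: "{x, y} - {x} = {y}" using xy(2) by auto
  have "c y = k" using xy(1) by (auto simp: chips_at_def)
  moreover have "bij_betw ?d {y} {k+1..k+1}" by (simp add: bij_betw_def)
  moreover have "(topple_step n)\<^sup>*\<^sup>* c ?d" using topple_step_pair[OF xy] by simp
  moreover have "?d x = k - 1" using xy(2) by simp
  moreover have "\<forall>a. a \<notin> {x, y} \<longrightarrow> ?d a = c a" by simp
  ultimately show ?thesis
    unfolding cascade_outcome_def B \<mu> Let_def rest by simp
qed


lemma cascade_outcome_step:
  assumes lk: "l < k" and xy: "chips_at n c k = {x, y}" "x < y"
    and d: "cascade_outcome n (c(x := k - 1, y := k + 1)) l (k - 1) d"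
  shows "cascade_outcome n c l k d"
proof -
  define c1 where "c1 = c(x := k - 1, y := k + 1)"
  define B where "B = chips_between n c l k"
  define \<mu> where "\<mu> = Min B"
  have xyc: "x \<in> chips n" "y \<in> chips n" "c x = k" "c y = k" using xy(1) by (auto simp: chips_at_def)
  have at_k: "a \<in> chips n \<Longrightarrow> c a = k \<Longrightarrow> a = x \<or> a = y" for a
    using xy(1) by (auto simp: chips_at_def)
  have B1: "chips_between n c1 l (k - 1) = B - {y}"
  proof (intro equalityI subsetI)
    fix a assume "a \<in> chips_between n c1 l (k - 1)"
    then have a: "a \<in> chips n" "l \<le> c1 a" "c1 a \<le> k - 1" by (simp_all add: chips_between_def)
    then have "a \<noteq> y" by (auto simp: c1_def)
    then show "a \<in> B - {y}"
      using a xyc lk by (cases "a = x") (auto simp: B_def chips_between_def c1_def)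
  next
    fix a assume "a \<in> B - {y}"
    then have a: "a \<in> chips n" "l \<le> c a" "c a \<le> k" "a \<noteq> y" by (auto simp: B_def chips_between_def)
    show "a \<in> chips_between n c1 l (k - 1)"
    proof (cases "a = x")
      case True
      then show ?thesis using a lk xy(2) by (auto simp: chips_between_def c1_def)
    next
      case False
      then have "c a \<noteq> k" using at_k a by blast
      then show ?thesis using a False by (auto simp: chips_between_def c1_def)
    qed
  qed
  have xB: "x \<in> B" "y \<in> B" using xyc lk by (auto simp: B_def chips_between_def)
  have \<mu>1: "Min (B - {y}) = \<mu>" using Min_Diff_greater[of B x y] xB xy(2) by (simp add: \<mu>_def B_def)
  have "\<mu> \<le> x" using xB(1) by (simp add: \<mu>_def B_def)
  then have \<mu>y: "\<mu> \<noteq> y" using xy(2) by simp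
  have at_k1: "chips_at n c1 (k - 1) = insert x (chips_at n c (k - 1))"
    using xyc xy(2) by (auto simp: chips_at_def c1_def)
  have steps: "(topple_step n)\<^sup>*\<^sup>* c1 d" and frame1: "\<forall>a. a \<notin> B - {y} \<longrightarrow> d a = c1 a"
    and d\<mu>: "d \<mu> = l - 1" and bij1: "bij_betw d (B - {y} - {\<mu>}) {l+1..k}"
    and inv1: "\<forall>a \<in> B - {y} - {\<mu>}. d a = c1 a + 1 \<or> (d a \<le> c1 a \<and> (\<forall>b \<in> chips_at n c1 (k - 1). a \<le> b) \<and>
      k - d a \<le> int (card {b \<in> B - {y}. a < b}))"
    using d unfolding cascade_outcome_def Let_def c1_def[symmetric] B1 \<mu>1 by simp_all
  have dy: "d y = k + 1" using frame1 by (simp add: c1_def)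
  have "(topple_step n)\<^sup>*\<^sup>* c d"
    using topple_step_pair[OF xy] steps unfolding c1_def by simp
  moreover have "\<forall>a. a \<notin> B \<longrightarrow> d a = c a"
    using frame1 xB by (auto simp: c1_def)
  moreover have "bij_betw d (B - {\<mu>}) {l+1..k+1}"
  proof -
    have "B - {\<mu>} = (B - {y} - {\<mu>}) \<union> {y}" "{l+1..k+1} = {l+1..k} \<union> {d y}"
      using xB(2) \<mu>y dy lk by auto
    then show ?thesis using notIn_Un_bij_betw[OF _ _ bij1, of y] dy by simp
  qed
  moreover have "d a = c a + 1 \<or>
      (d a \<le> c a \<and> (\<forall>b \<in> chips_at n c k. a \<le> b) \<and> k + 1 - d a \<le> int (card {b \<in> B. a < b}))"
    if a: "a \<in> B - {\<mu>}" for a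
  proof (cases "a = y")
    case True
    then show ?thesis using dy xyc by simp
  next
    case False
    then have a1: "a \<in> B - {y} - {\<mu>}" using a by simp
    have more: "card {b \<in> B. a < b} = card {b \<in> B - {y}. a < b} + 1" if "a < y"
    proof -
      have "{b \<in> B. a < b} = insert y {b \<in> B - {y}. a < b}" using that xB(2) by auto
      then show ?thesis by (simp add: B_def)
    qed
    have below_x: "\<forall>b \<in> chips_at n c k. a \<le> b" if "a \<le> x" using that xy by auto
    from inv1[rule_format, OF a1] show ?thesis
    proof (elim disjE conjE)
      assume step_right: "d a = c1 a + 1"
      show ?thesis
      proof (cases "a = x")
        case True
        then have "d a = c a" using step_right xyc xy(2) by (simp add: c1_def)
        moreover have "0 < card {b \<in> B. a < b}"
          using True xB(2) xy(2) by (auto simp: B_def card_gt_0_iff)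
        ultimately show ?thesis using True below_x xyc by simp
      next
        case False
        then show ?thesis using step_right \<open>a \<noteq> y\<close> by (simp add: c1_def)
      qed
    next
      assume h: "d a \<le> c1 a" "\<forall>b \<in> chips_at n c1 (k - 1). a \<le> b" "k - d a \<le> int (card {b \<in> B - {y}. a < b})"
      then have "a \<le> x" using at_k1 by auto
      moreover have "d a \<le> c a" using h(1) xyc \<open>a \<noteq> y\<close> by (auto simp: c1_def split: if_splits)
      ultimately show ?thesis using h(3) more below_x xy(2) by simp
    qed
  qed
  ultimately show ?thesis
    using d\<mu> unfolding cascade_outcome_def Let_def B_def[symmetric] \<mu>_def[symmetric] by blast
qed


lemma card_2_obtain_less:
  assumes "card S = 2"
  obtains x y :: nat where "S = {x, y}" "x < y"
proof -
  obtain x y where "S = {x, y}" "x \<noteq> y" using assms card_2_iff by metis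
  then show ?thesis using that by (metis insert_commute linorder_neq_iff)
qed

lemma cascade_outcome_exists:
  assumes "l \<le> k" "card (chips_at n c k) = 2" "\<forall>s. l \<le> s \<and> s < k \<longrightarrow> card (chips_at n c s) = 1"
  shows "\<exists>d. cascade_outcome n c l k d"
  using assms
proof (induction "nat (k - l)" arbitrary: c k)
  case 0
  then have "k = l" by simp
  obtain x y where "chips_at n c k = {x, y}" "x < y" using card_2_obtain_less[OF "0.prems"(2)] .
  then show ?case using cascade_outcome_single_site \<open>k = l\<close> by blast
next
  case (Suc m)
  obtain x y where xy: "chips_at n c k = {x, y}" "x < y" using card_2_obtain_less[OF Suc.prems(2)] .
  let ?c1 = "c(x := k - 1, y := k + 1)"
  have at: "chips_at n ?c1 s = chips_at n c s - {x, y} \<union> {z \<in> {x} \<inter> chips n. s = k - 1} \<union>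
      {z \<in> {y} \<inter> chips n. s = k + 1}" for s
    using chips_at_fun_upd2 xy(2) by simp
  have "x \<in> chips_at n c k" "y \<in> chips_at n c k" using xy(1) by auto
  then have xy_in: "x \<in> chips n" "y \<in> chips n" "x \<notin> chips_at n c (k - 1)" "y \<notin> chips_at n c (k - 1)"
    "c x = k" "c y = k"
    by (auto simp: chips_at_def)
  have "card (chips_at n ?c1 (k - 1)) = 2"
  proof -
    have "chips_at n ?c1 (k - 1) = insert x (chips_at n c (k - 1))" using at xy_in by auto
    moreover have "card (chips_at n c (k - 1)) = 1" using Suc by simp
    ultimately show ?thesis using xy_in by simp
  qed
  moreover have "card (chips_at n ?c1 s) = 1" if "l \<le> s" "s < k - 1" for s
  proof -
    have "chips_at n ?c1 s = chips_at n c s" using at xy_in that by (auto simp: chips_at_def)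
    then show ?thesis using Suc that by simp
  qed
  moreover have "m = nat (k - 1 - l)" "l \<le> k - 1" using Suc.hyps(2) by simp_all
  ultimately obtain d where "cascade_outcome n ?c1 l (k - 1) d"
    using Suc.hyps(1)[of "k - 1" ?c1] by auto
  moreover have "l < k" using Suc.hyps(2) by simp
  ultimately show ?case using cascade_outcome_step[OF _ xy] by blast
qed


definition window_config :: "nat \<Rightarrow> (nat \<Rightarrow> int) \<Rightarrow> int \<Rightarrow> int \<Rightarrow> int \<Rightarrow> bool" where
  "window_config n c e m q \<longleftrightarrow> chips_at n c e = {} \<and> chips_at n c (e + m + 1) = {} \<and>
     card (chips_at n c (e + q)) = 2 \<and>
     (\<forall>s. e + 1 \<le> s \<and> s \<le> e + m \<and> s \<noteq> e + q \<longrightarrow> card (chips_at n c s) = 1)"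

lemma window_config_range:
  assumes "window_config n c e m q" "a \<in> chips_between n c e (e + m + 1)"
  shows "e + 1 \<le> c a \<and> c a \<le> e + m"
proof -
  have "c a \<noteq> e" "c a \<noteq> e + m + 1"
    using assms by (auto simp: window_config_def chips_between_def chips_at_def)
  then show ?thesis using assms(2) by (auto simp: chips_between_def)
qed

lemma strict_mono_on_insert_least:
  fixes z :: "'a :: order"
  assumes "\<forall>a \<in> A. z < a \<and> f z < f a"
  shows "strict_mono_on (insert z A) f \<longleftrightarrow> strict_mono_on A f"
proof
  assume "strict_mono_on (insert z A) f"
  then show "strict_mono_on A f" by (auto simp: strict_mono_on_def)
next
  assume mono: "strict_mono_on A f"
  show "strict_mono_on (insert z A) f"
  proof (rule strict_mono_onI)
    fix r s assume "r \<in> insert z A" "s \<in> insert z A" "r < s"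
    then show "f r < f s" using assms strict_mono_onD[OF mono] by (auto dest: order.asym)
  qed
qed

lemma strict_mono_on_interval_ge:
  fixes f :: "nat \<Rightarrow> int"
  assumes "strict_mono_on {lo..hi} f" "\<forall>a \<in> {lo..hi}. int lo \<le> f a" "a \<in> {lo..hi}"
  shows "int a \<le> f a"
proof -
  have "lo + k \<le> hi \<longrightarrow> int (lo + k) \<le> f (lo + k)" for k
  proof (induction k)
    case (Suc k)
    then show ?case using strict_mono_onD[OF assms(1), of "lo + k" "lo + Suc k"] by auto
  qed (use assms(2) in auto)
  then show ?thesis using assms(3) by (metis atLeastAtMost_iff le_add_diff_inverse)
qed

lemma bij_betw_interval_ge_eq:
  fixes f :: "nat \<Rightarrow> int"
  assumes "bij_betw f A (int ` A)" "finite A" "\<forall>a \<in> A. int a \<le> f a" "a \<in> A"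
  shows "f a = int a"
proof -
  have "(\<Sum>a \<in> A. f a) = (\<Sum>a \<in> A. int a)"
    using sum.reindex_bij_betw[OF assms(1), of id] by (simp add: sum.reindex)
  then have "(\<Sum>a \<in> A. f a - int a) = 0" by (simp add: sum_subtractf)
  then show ?thesis using sum_nonneg_eq_0_iff[OF assms(2), of "\<lambda>a. f a - int a"] assms(3,4) by auto
qed

lemma strict_mono_on_interval_iff_ge:
  fixes f :: "nat \<Rightarrow> int"
  assumes "bij_betw f {lo..hi} (int ` {lo..hi})"
  shows "strict_mono_on {lo..hi} f \<longleftrightarrow> (\<forall>a \<in> {lo..hi}. int a \<le> f a)"
proof
  assume "strict_mono_on {lo..hi} f"
  moreover have "\<forall>a \<in> {lo..hi}. int lo \<le> f a"
  proof
    fix a assume "a \<in> {lo..hi}"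
    then have "f a \<in> int ` {lo..hi}" using assms by (auto simp: bij_betw_def)
    then show "int lo \<le> f a" by auto
  qed
  ultimately show "\<forall>a \<in> {lo..hi}. int a \<le> f a" using strict_mono_on_interval_ge by blast
next
  assume "\<forall>a \<in> {lo..hi}. int a \<le> f a"
  then have "\<forall>a \<in> {lo..hi}. f a = int a" using bij_betw_interval_ge_eq[OF assms] by blast
  then show "strict_mono_on {lo..hi} f" by (simp add: strict_mono_on_def)
qed

definition window_outcome :: "nat \<Rightarrow> (nat \<Rightarrow> int) \<Rightarrow> int \<Rightarrow> int \<Rightarrow> int \<Rightarrow> (nat \<Rightarrow> int) \<Rightarrow> bool" where
  "window_outcome n c e m q d \<longleftrightarrow> (let W = chips_between n c e (e + m + 1) in
     (topple_step n)\<^sup>*\<^sup>* c d \<and> (\<forall>a. a \<notin> W \<longrightarrow> d a = c a) \<and>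
     (\<forall>a \<in> W. e \<le> d a \<and> d a \<le> e + m + 1) \<and> inj_on d W \<and>
     (W = {a. e + 1 \<le> int a \<and> int a \<le> e + m + 1} \<longrightarrow>
        (strict_mono_on W d \<longleftrightarrow> displacement_bounded W c (m + 1 - q) q)))"

locale window_cascade =
  fixes n :: nat and c d :: "nat \<Rightarrow> int" and e m q :: int
  assumes e_nonneg: "0 \<le> e" and q_pos: "1 \<le> q" and q_le_m: "q \<le> m"
    and window: "window_config n c e m q"
    and cascade: "cascade_outcome n c (e + 1) (e + q) d"
begin

abbreviation W where "W \<equiv> chips_between n c e (e + m + 1)"
abbreviation B where "B \<equiv> chips_between n c (e + 1) (e + q)"
abbreviation \<mu> where "\<mu> \<equiv> Min B"

lemma B_subset_W: "B \<subseteq> W"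
  using q_le_m by (auto simp: chips_between_def)

lemma \<mu>_in_B: "\<mu> \<in> B"
proof -
  have "chips_at n c (e + q) \<noteq> {}" using window by (auto simp: window_config_def)
  then obtain a where "a \<in> chips_at n c (e + q)" by blast
  then have "a \<in> B" using q_pos by (simp add: chips_between_def chips_at_def)
  then have "B \<noteq> {}" by blast
  then show ?thesis by (rule Min_in[OF finite_chips_between])
qed

lemma cascade_facts:
  "(topple_step n)\<^sup>*\<^sup>* c d" "\<And>a. a \<notin> B \<Longrightarrow> d a = c a" "d \<mu> = e"
  "bij_betw d (B - {\<mu>}) {e+2..e+q+1}"
  "\<And>a. a \<in> B - {\<mu>} \<Longrightarrow> d a = c a + 1 \<or>
     (d a \<le> c a \<and> e + q + 1 - d a \<le> int (card {b \<in> B. a < b}))"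
proof -
  have two: "e + 1 + 1 = e + 2" "e + 1 - 1 = e" by simp_all
  note C = cascade[unfolded cascade_outcome_def Let_def two]
  show "(topple_step n)\<^sup>*\<^sup>* c d" "\<And>a. a \<notin> B \<Longrightarrow> d a = c a" "d \<mu> = e"
    "bij_betw d (B - {\<mu>}) {e+2..e+q+1}" using C by simp_all
  show "d a = c a + 1 \<or> (d a \<le> c a \<and> e + q + 1 - d a \<le> int (card {b \<in> B. a < b}))" if "a \<in> B - {\<mu>}" for a
    using C that by blast
qed


lemma W_range: "a \<in> W \<Longrightarrow> e + 1 \<le> c a \<and> c a \<le> e + m"
  using window_config_range[OF window] .

lemma cascade_range: "a \<in> B - {\<mu>} \<Longrightarrow> e + 2 \<le> d a \<and> d a \<le> e + q + 1"
  using cascade_facts(4) by (auto simp: bij_betw_def)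

lemma shifted_range: "a \<in> W - {\<mu>} \<Longrightarrow> e + 2 \<le> d a \<and> d a \<le> e + m + 1"
proof -
  assume a: "a \<in> W - {\<mu>}"
  show ?thesis
  proof (cases "a \<in> B")
    case True
    then show ?thesis using cascade_range a q_le_m by force
  next
    case False
    then have "e + q < c a" using a W_range[of a] by (auto simp: chips_between_def)
    then show ?thesis using cascade_facts(2)[OF False] W_range[of a] a q_pos by auto
  qed
qed

lemma shifted_window_chips: "chips_between n d (e + 1) (e + m + 1) = W - {\<mu>}"
proof (intro equalityI subsetI)
  fix a assume a: "a \<in> chips_between n d (e + 1) (e + m + 1)"
  then have "a \<noteq> \<mu>" using cascade_facts(3) by (auto simp: chips_between_def)
  moreover have "a \<in> W"
  proof (cases "a \<in> B")
    case False
    then show ?thesis using a cascade_facts(2)[OF False] by (auto simp: chips_between_def)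
  qed (use B_subset_W in blast)
  ultimately show "a \<in> W - {\<mu>}" by simp
next
  fix a assume "a \<in> W - {\<mu>}"
  then show "a \<in> chips_between n d (e + 1) (e + m + 1)"
    using shifted_range[of a] by (auto simp: chips_between_def)
qed


lemma chips_at_after_cascade:
  assumes "s \<noteq> e"
  shows "chips_at n d s = {a \<in> B - {\<mu>}. d a = s} \<union> (chips_at n c s - B)"
proof (intro equalityI subsetI)
  fix a assume a: "a \<in> chips_at n d s"
  show "a \<in> {a \<in> B - {\<mu>}. d a = s} \<union> (chips_at n c s - B)"
  proof (cases "a \<in> B")
    case True
    then show ?thesis using a assms cascade_facts(3) by (auto simp: chips_at_def)
  next
    case False
    then show ?thesis using a cascade_facts(2)[OF False] by (auto simp: chips_at_def)
  qed
next
  fix a assume "a \<in> {a \<in> B - {\<mu>}. d a = s} \<union> (chips_at n c s - B)"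
  then show "a \<in> chips_at n d s"
    using cascade_facts(2) by (auto simp: chips_at_def chips_between_def)
qed

lemma card_chips_at_after_cascade:
  assumes "e + 1 \<le> s"
  shows "card (chips_at n d s) =
    (if s \<in> {e+2..e+q+1} then 1 else 0) + (if s \<le> e + q then 0 else card (chips_at n c s))"
proof -
  have "card {a \<in> B - {\<mu>}. d a = s} = (if s \<in> {e+2..e+q+1} then 1 else 0)"
    using card_fibre_bij_betw[OF cascade_facts(4)] cascade_range by force
  moreover have "chips_at n c s - B = (if s \<le> e + q then {} else chips_at n c s)"
    using assms by (auto simp: chips_at_def chips_between_def)
  moreover have "s \<noteq> e" using assms by simp
  then have "card (chips_at n d s) = card {a \<in> B - {\<mu>}. d a = s} + card (chips_at n c s - B)"
    unfolding chips_at_after_cascade[OF \<open>s \<noteq> e\<close>] by (intro card_Un_disjoint) auto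
  ultimately show ?thesis by simp
qed

lemma shifted_window_config:
  assumes "q < m"
  shows "window_config n d (e + 1) (m - 1) q"
proof -
  have c: "card (chips_at n c s) = (if s = e + q then 2 else 1)" if "e + 1 \<le> s" "s \<le> e + m" for s
    using window that by (auto simp: window_config_def)
  have "chips_at n d (e + 1) = {}"
    using card_chips_at_after_cascade[of "e + 1"] q_pos by (simp add: card_eq_0_iff)
  moreover have "chips_at n d (e + m + 1) = {}"
    using card_chips_at_after_cascade[of "e + m + 1"] window assms q_pos
    by (simp add: card_eq_0_iff window_config_def)
  moreover have "card (chips_at n d (e + 1 + q)) = 2"
    using card_chips_at_after_cascade[of "e + 1 + q"] c[of "e + q + 1"] assms q_pos
    by (simp add: ac_simps)
  moreover have "card (chips_at n d s) = 1" if "e + 2 \<le> s" "s \<le> e + m" "s \<noteq> e + 1 + q" for s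
    using card_chips_at_after_cascade[of s] c[of s] that by auto
  ultimately show ?thesis by (simp add: window_config_def ac_simps)
qed


lemma bounds_transfer:
  assumes labels: "W = {a. e + 1 \<le> int a \<and> int a \<le> e + m + 1}" and \<mu>: "int \<mu> = e + 1"
  shows "displacement_bounded W c (m + 1 - q) q \<longleftrightarrow> displacement_bounded (W - {\<mu>}) d (m - q) q"
proof -
  have "int \<mu> - (m + 1 - q) \<le> c \<mu> \<and> c \<mu> \<le> int \<mu> + q - 1"
    using \<mu>_in_B \<mu> q_le_m by (auto simp: chips_between_def)
  moreover have "(int a - (m + 1 - q) \<le> c a \<and> c a \<le> int a + q - 1) \<longleftrightarrow>
      (int a - (m - q) \<le> d a \<and> d a \<le> int a + q - 1)" if a: "a \<in> W - {\<mu>}" for a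
  proof -
    have a_label: "e + 2 \<le> int a" "int a \<le> e + m + 1" using a labels \<mu> by auto
    show ?thesis
    proof (cases "a \<in> B")
      case False
      then have "d a = c a" "e + q < c a" using cascade_facts(2) a W_range[of a]
        by (auto simp: chips_between_def)
      then show ?thesis using a_label by auto
    next
      case True
      then have "c a \<le> e + q" "d a \<le> e + q + 1" using a cascade_range[of a] by (auto simp: chips_between_def)
      moreover have "int a - (m - q) \<le> d a" if "d a \<le> c a" "e + q + 1 - d a \<le> int (card {b \<in> B. a < b})"
      proof -
        have "{b \<in> B. a < b} \<subseteq> {a<..nat (e + m + 1)}" using B_subset_W labels by auto
        then have "card {b \<in> B. a < b} \<le> nat (e + m + 1) - a"
          using card_mono[of "{a<..nat (e + m + 1)}"] by fastforce
        then show ?thesis using that(2) a_label e_nonneg by linarith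
      qed
      ultimately show ?thesis using cascade_facts(5)[of a] True a a_label by auto
    qed
  qed
  moreover have "W = insert \<mu> (W - {\<mu>})" using \<mu>_in_B B_subset_W by auto
  ultimately show ?thesis unfolding displacement_bounded_def by (metis (no_types, lifting) Diff_iff insert_iff)
qed

lemma first_label_below_\<mu>:
  assumes labels: "W = {a. e + 1 \<le> int a \<and> int a \<le> e + m + 1}" and \<mu>: "int \<mu> \<noteq> e + 1"
  shows "nat (e + 1) \<in> W" "nat (e + 1) < \<mu>" "nat (e + 1) \<notin> B"
proof -
  show "nat (e + 1) \<in> W" using labels e_nonneg q_pos q_le_m by auto
  moreover have "e + 1 \<le> int \<mu>" using \<mu>_in_B B_subset_W labels by auto
  ultimately show "nat (e + 1) < \<mu>" using \<mu> e_nonneg by (simp add: nat_less_iff)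
  then show "nat (e + 1) \<notin> B" using Min_le[OF finite_chips_between] by fastforce
qed

lemma unbounded_unless_first:
  assumes labels: "W = {a. e + 1 \<le> int a \<and> int a \<le> e + m + 1}" and \<mu>: "int \<mu> \<noteq> e + 1"
  shows "\<not> displacement_bounded W c (m + 1 - q) q"
proof
  let ?a = "nat (e + 1)"
  assume "displacement_bounded W c (m + 1 - q) q"
  then have "c ?a \<le> int ?a + q - 1" using first_label_below_\<mu>(1)[OF assms] by (auto simp: displacement_bounded_def)
  moreover have "e + q < c ?a"
    using first_label_below_\<mu>[OF assms] W_range[of ?a] by (auto simp: chips_between_def)
  ultimately show False using e_nonneg by simp
qed

lemma last_cascade_block:
  assumes "q = m"
  shows "B = W"
  using W_range B_subset_W assms by (auto simp: chips_between_def)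


lemma final_cascade_outcome:
  assumes "q = m"
  shows "window_outcome n c e m q d"
proof -
  have BW: "B = W" using last_cascade_block[OF assms] .
  have W_ins: "W = insert \<mu> (W - {\<mu>})" using \<mu>_in_B BW by auto
  have bij: "bij_betw d (W - {\<mu>}) {e+2..e+m+1}" using cascade_facts(4) BW assms by simp
  have "\<forall>a. a \<notin> W \<longrightarrow> d a = c a" using cascade_facts(2) BW by simp
  moreover have "\<forall>a \<in> W. e \<le> d a \<and> d a \<le> e + m + 1"
  proof
    fix a assume "a \<in> W"
    then show "e \<le> d a \<and> d a \<le> e + m + 1"
      using shifted_range[of a] cascade_facts(3) q_le_m q_pos by (cases "a = \<mu>") auto
  qed
  moreover have "inj_on d W"
  proof -
    have "d \<mu> \<notin> d ` (W - {\<mu>})" using cascade_facts(3) shifted_range by force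
    then have "inj_on d (insert \<mu> (W - {\<mu>}))"
      unfolding inj_on_insert using bij by (simp add: bij_betw_def)
    then show ?thesis using W_ins[symmetric] by (simp only:)
  qed
  moreover have "strict_mono_on W d \<longleftrightarrow> displacement_bounded W c (m + 1 - q) q"
    if labels: "W = {a. e + 1 \<le> int a \<and> int a \<le> e + m + 1}"
  proof -
    have \<mu>: "int \<mu> = e + 1"
    proof (rule ccontr)
      assume "int \<mu> \<noteq> e + 1"
      then show False using first_label_below_\<mu>(1,3)[OF labels] BW by simp
    qed
    have W': "W - {\<mu>} = {nat (e + 2)..nat (e + m + 1)}"
    proof (intro equalityI subsetI)
      fix a assume "a \<in> W - {\<mu>}"
      then have "e + 2 \<le> int a" "int a \<le> e + m + 1" using labels \<mu> by auto
      then show "a \<in> {nat (e + 2)..nat (e + m + 1)}" by (simp add: nat_le_iff le_nat_iff)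
    next
      fix a assume "a \<in> {nat (e + 2)..nat (e + m + 1)}"
      then have "e + 2 \<le> int a" "int a \<le> e + m + 1" using e_nonneg by auto
      then show "a \<in> W - {\<mu>}" using labels \<mu> by auto
    qed
    have "int ` {nat (e + 2)..nat (e + m + 1)} = {e+2..e+m+1}" using e_nonneg q_pos
      by (simp add: image_int_atLeastAtMost)
    then have bij': "bij_betw d {nat (e + 2)..nat (e + m + 1)} (int ` {nat (e + 2)..nat (e + m + 1)})"
      using bij W' by simp
    have "strict_mono_on W d \<longleftrightarrow> strict_mono_on (W - {\<mu>}) d"
      proof -
      have "\<forall>a \<in> W - {\<mu>}. \<mu> < a \<and> d \<mu> < d a"
        using labels \<mu> cascade_facts(3) shifted_range by fastforce
      then have "strict_mono_on (insert \<mu> (W - {\<mu>})) d \<longleftrightarrow> strict_mono_on (W - {\<mu>}) d"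
        by (rule strict_mono_on_insert_least)
      then show ?thesis using W_ins[symmetric] by (simp only:)
    qed
    also have "\<dots> \<longleftrightarrow> (\<forall>a \<in> W - {\<mu>}. int a \<le> d a)"
      using strict_mono_on_interval_iff_ge[OF bij'] W' by simp
    also have "\<dots> \<longleftrightarrow> displacement_bounded (W - {\<mu>}) d (m - q) q"
      using shifted_range labels assms \<mu> by (force simp: displacement_bounded_def)
    also have "\<dots> \<longleftrightarrow> displacement_bounded W c (m + 1 - q) q"
      using bounds_transfer[OF labels \<mu>] by simp
    finally show ?thesis .
  qed
  ultimately show ?thesis
    using cascade_facts(1) unfolding window_outcome_def Let_def by blast
qed


lemma shifted_outcome:
  assumes "q < m" and d': "window_outcome n d (e + 1) (m - 1) q d'"
  shows "window_outcome n c e m q d'"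
proof -
  have ar: "e + 1 + (m - 1) + 1 = e + m + 1" "m - 1 + 1 - q = m - q" "e + 1 + 1 = e + 2" by simp_all
  have steps': "(topple_step n)\<^sup>*\<^sup>* d d'" and frame': "\<forall>a. a \<notin> W - {\<mu>} \<longrightarrow> d' a = d a"
    and range': "\<forall>a \<in> W - {\<mu>}. e + 1 \<le> d' a \<and> d' a \<le> e + m + 1" and inj': "inj_on d' (W - {\<mu>})"
    and sorted': "W - {\<mu>} = {a. e + 2 \<le> int a \<and> int a \<le> e + m + 1} \<Longrightarrow>
      (strict_mono_on (W - {\<mu>}) d' \<longleftrightarrow> displacement_bounded (W - {\<mu>}) d (m - q) q)"
    using d' unfolding window_outcome_def Let_def ar shifted_window_chips by simp_all
  have d'\<mu>: "d' \<mu> = e" using frame' cascade_facts(3) by simp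
  have W_ins: "W = insert \<mu> (W - {\<mu>})" using \<mu>_in_B B_subset_W by auto
  have "(topple_step n)\<^sup>*\<^sup>* c d'" using cascade_facts(1) steps' by simp
  moreover have "\<forall>a. a \<notin> W \<longrightarrow> d' a = c a"
  proof (intro allI impI)
    fix a assume "a \<notin> W"
    then have "a \<notin> W - {\<mu>}" "a \<notin> B" using B_subset_W by auto
    then show "d' a = c a" using frame' cascade_facts(2) by simp
  qed
  moreover have "\<forall>a \<in> W. e \<le> d' a \<and> d' a \<le> e + m + 1"
  proof
    fix a assume "a \<in> W"
    show "e \<le> d' a \<and> d' a \<le> e + m + 1"
    proof (cases "a = \<mu>")
      case False
      then have "a \<in> W - {\<mu>}" using \<open>a \<in> W\<close> by simp
      then show ?thesis using bspec[OF range'] by fastforce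
    qed (use d'\<mu> q_pos assms(1) in simp)
  qed
  moreover have "inj_on d' W"
  proof -
    have "d' \<mu> \<notin> d' ` (W - {\<mu>})" using range' d'\<mu> by force
    then have "inj_on d' (insert \<mu> (W - {\<mu>}))" unfolding inj_on_insert using inj' by simp
    then show ?thesis using W_ins[symmetric] by (simp only:)
  qed
  moreover have "strict_mono_on W d' \<longleftrightarrow> displacement_bounded W c (m + 1 - q) q"
    if labels: "W = {a. e + 1 \<le> int a \<and> int a \<le> e + m + 1}"
  proof (cases "int \<mu> = e + 1")
    case True
    have "\<mu> < a \<and> d' \<mu> < d' a" if "a \<in> W - {\<mu>}" for a
    proof -
      have "e + 1 \<le> int a" "int a \<noteq> e + 1" using that labels True by auto
      moreover have "e + 1 \<le> d' a" using bspec[OF range' that] by simp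
      ultimately show ?thesis using d'\<mu> True by simp
    qed
    then have "\<forall>a \<in> W - {\<mu>}. \<mu> < a \<and> d' \<mu> < d' a" by blast
    then have "strict_mono_on (insert \<mu> (W - {\<mu>})) d' \<longleftrightarrow> strict_mono_on (W - {\<mu>}) d'"
      by (rule strict_mono_on_insert_least)
    then have "strict_mono_on W d' \<longleftrightarrow> strict_mono_on (W - {\<mu>}) d'"
      using W_ins[symmetric] by (simp only:)
    also have "\<dots> \<longleftrightarrow> displacement_bounded (W - {\<mu>}) d (m - q) q"
    proof (rule sorted')
      show "W - {\<mu>} = {a. e + 2 \<le> int a \<and> int a \<le> e + m + 1}"
      proof (intro equalityI subsetI)
        fix a assume "a \<in> W - {\<mu>}"
        then have "e + 1 \<le> int a" "int a \<le> e + m + 1" "int a \<noteq> e + 1" using labels True by auto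
        then show "a \<in> {a. e + 2 \<le> int a \<and> int a \<le> e + m + 1}" by simp
      next
        fix a assume "a \<in> {a. e + 2 \<le> int a \<and> int a \<le> e + m + 1}"
        then have "e + 1 \<le> int a" "int a \<le> e + m + 1" "int a \<noteq> int \<mu>" using True by auto
        then show "a \<in> W - {\<mu>}" using labels by auto
      qed
    qed
    also have "\<dots> \<longleftrightarrow> displacement_bounded W c (m + 1 - q) q"
      using bounds_transfer[OF labels True] by simp
    finally show ?thesis .
  next
    case False
    let ?a = "nat (e + 1)"
    have "?a \<in> W - {\<mu>}" "?a < \<mu>" using first_label_below_\<mu>[OF labels False] by auto
    moreover have "\<mu> \<in> W" using \<mu>_in_B B_subset_W by auto
    moreover have "e + 1 \<le> d' ?a" using bspec[OF range' \<open>?a \<in> W - {\<mu>}\<close>] by simp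
    ultimately have "\<not> strict_mono_on W d'"
      using d'\<mu> strict_mono_onD[of W d' ?a \<mu>] by auto
    then show ?thesis using unbounded_unless_first[OF labels False] by simp
  qed
  ultimately show ?thesis unfolding window_outcome_def Let_def by blast
qed

end


lemma window_config_cascade:
  assumes "window_config n c e m q" "1 \<le> q" "q \<le> m"
  shows "\<exists>d. cascade_outcome n c (e + 1) (e + q) d"
  using assms by (intro cascade_outcome_exists) (auto simp: window_config_def)

lemma window_outcome_exists:
  assumes "0 \<le> e" "1 \<le> q" "q \<le> m" "window_config n c e m q"
  shows "\<exists>d. window_outcome n c e m q d"
  using assms
proof (induction "nat (m - q)" arbitrary: c e m)
  case 0
  obtain d where "cascade_outcome n c (e + 1) (e + q) d" using window_config_cascade 0 by blast
  then interpret window_cascade n c d e m q using 0 by unfold_locales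
  show ?case using final_cascade_outcome 0 by auto
next
  case (Suc k)
  obtain d where "cascade_outcome n c (e + 1) (e + q) d" using window_config_cascade Suc by blast
  then interpret window_cascade n c d e m q using Suc by unfold_locales
  have "q < m" "k = nat (m - 1 - q)" using Suc.hyps(2) by simp_all
  then obtain d' where "window_outcome n d (e + 1) (m - 1) q d'"
    using Suc.hyps(1)[of "m - 1" "e + 1" d] Suc.prems shifted_window_config by auto
  then show ?case using shifted_outcome \<open>q < m\<close> by blast
qed

lemma config_S_window_config:
  assumes "config_S n p c" "1 \<le> p" "p \<le> n"
  shows "window_config n c 0 (int n) (int p)"
proof -
  note card = config_S_card_chips_at[OF assms]
  have "card (chips_at n c 0) = 0" "card (chips_at n c (int n + 1)) = 0"
    using card assms(2,3) by simp_all
  then have "chips_at n c 0 = {}" "chips_at n c (int n + 1) = {}" by simp_all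
  then show ?thesis using card by (simp add: window_config_def)
qed

lemma inj_on_stable: "inj_on c (chips n) \<Longrightarrow> stable n c"
  unfolding stable_def topple_step_def by (auto dest: inj_onD)

theorem toppleable_iff_displacement_bounded:
  assumes "config_S n p c" "1 \<le> p" "p \<le> n"
  shows "toppleable n c \<longleftrightarrow> displacement_bounded (chips n) c (int n + 1 - int p) (int p)"
proof -
  obtain d where d: "window_outcome n c 0 (int n) (int p) d"
    using window_outcome_exists[OF _ _ _ config_S_window_config[OF assms]] assms(2,3) by auto
  have "chips_between n c 0 (0 + int n + 1) = chips n"
    using assms(1) by (auto simp: chips_between_def config_S_def PiE_iff)
  moreover have "chips n = {a. 0 + 1 \<le> int a \<and> int a \<le> 0 + int n + 1}" by (auto simp: chips_def)
  ultimately have "(topple_step n)\<^sup>*\<^sup>* c d" "inj_on d (chips n)"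
    "strict_mono_on (chips n) d \<longleftrightarrow> displacement_bounded (chips n) c (int n + 1 - int p) (int p)"
    using d unfolding window_outcome_def Let_def by (simp_all add: ac_simps)
  moreover have "identity_final n d \<longleftrightarrow> strict_mono_on (chips n) d"
    by (auto simp: identity_final_def strict_mono_on_def)
  ultimately show ?thesis
    using toppleable_iff_stable_identity[OF config_S_balanced[OF assms]] inj_on_stable by blast
qed


theorem theorem2p4:
  fixes n p :: nat
  assumes "1 \<le> n" and "1 \<le> p" and "p \<le> n"
  shows "real (card {c. config_S n p c \<and> toppleable n c}) = real (polyB (n - p + 1) p) / 2"
proof -
  have "{c. config_S n p c \<and> toppleable n c} =
      {c. config_S n p c \<and> displacement_bounded (chips n) c (int n + 1 - int p) (int p)}"
    using toppleable_iff_displacement_bounded assms(2,3) by blast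
  then have "2 * card {c. config_S n p c \<and> toppleable n c} = polyB (n - p + 1) p"
    using card_bounded_configs[OF assms(2,3)] assms(3) by (simp add: Suc_diff_le)
  then show ?thesis by (simp add: field_simps flip: of_nat_mult)
qed

end
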